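(* Let $(\tilde Y,F)$ and $(\tilde Y',F')$ be $C^\omega_\rho$-hyperbolic transformations with implicit representations $( \mathcal Z_0, \mathcal W_1)$ and $( \mathcal Z_1, \mathcal W_2)$ respectively, and let $(\tilde {\mathcal Z}_0,\tilde {\mathcal W}_2)$ be the implicit representation of $(\tilde Y,F) \star (\tilde Y',F')$. Then, whenever $F$ sends $(z_0, w_0)\in \tilde Y$ to $(z_1,w_1)\in \tilde Y'$ and $F'$ sends $(z_1,w_1)$ to $(z_2,w_2)$, it holds \[ \frac1{1+\theta^2}\le \frac{ | \partial_{z_{2}} \tilde {\mathcal Z}_0 (z_{2},w_0)| }{ | \partial_{z_{1}} {\mathcal Z}_0 ( z_{1},w_0 )| \cdot |\partial_{z_{2}} {\mathcal Z}_{1} ( z_{2},w_{1})|} \le \frac1{1-\theta^2} \quad\text{and}\quad \frac1{1+\theta^2}\le \frac{ | \partial_{w_{0}} \tilde {\mathcal W}_2 (z_{2},w_0)| }{ | \partial_{w_{0}} {\mathcal W}_1 ( z_{1},w_0 )| \cdot |\partial_{w_{1}} {\mathcal W}_{2} ( z_{2},w_{1})|} \le \frac1{1-\theta^2}.\]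
   Context: Let $I=[-1,1]$, $\theta=1/2$, $\lambda=2$, $\rho>0$, $\tilde I=I+i[-\rho,\rho]$, $\tilde Y^e=\tilde I^2$, $\partial^s\tilde Y^{e}=\partial\tilde I\times\tilde I$, $\partial^u\tilde Y^{e}=\tilde I\times\partial\tilde I$, $\tilde\chi_h=\{|u_w|<\theta|u_z|\}$, $\tilde\chi_v=\{|u_z|<\theta|u_w|\}$. A box is a set $Y=\{(x,y)\in I^2:\phi^-(y)\le x\le\phi^+(y)\}$ diffeomorphic to $I^2$ with $\phi^\pm\in C^1(I)$, $\phi^-<\phi^+$, $\|\phi^\pm\|_{C^0}\le1$, $\|D\phi^\pm\|_{C^0}<\theta$. A $C^\omega_\rho$-box is a set $\tilde Y\subset\tilde I^2$ such that $\tilde Y\cap I^2$ is a box and $\tilde Y=\zeta(\tilde I^2)$ for a biholomorphism $\zeta(z,w)=(\mathcal Z(z,w),w)$ with $|\partial_w\mathcal Z|<\theta$; $\partial^u\tilde Y=\zeta(\tilde I\times\partial\tilde I)$, $\partial^s\tilde Y=\zeta(\partial\tilde I\times\tilde I)$. A $C^\omega_\rho$-hyperbolic transformation $(\tilde Y,F)$ is a $C^\omega_\rho$-box with a biholomorphism $F$ onto its image in $\tilde Y^e$ such that either $(\tilde Y,F)=(\tilde Y^e,\mathrm{id})$ or: (1) $F(\tilde Y)\subset\tilde Y^e$, $F(\partial^s\tilde Y)\subset\partial^s\tilde Y^e$, $\tilde Y\cap\partial^s\tilde Y^e=\emptyset$, $F(\tilde Y)\cap\partial^u\tilde Y^e=\emptyset$;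 (2) for $z\in\tilde Y$, $D_zF$ sends every non-zero vector outside $\tilde\chi_v$ into $\tilde\chi_h$ and more than $\lambda$-expands the modulus of its first coordinate; (3) for $z\in F(\tilde Y)$, $D_zF^{-1}$ sends every non-zero vector outside $\tilde\chi_h$ into $\tilde\chi_v$ and more than $\lambda$-expands the modulus of its second coordinate; (4) $F$ restricted to $\tilde Y\cap\mathbb R^2$ is a real analytic hyperbolic transformation (the real analogue of (1)–(3) on a box). The $\star$-product is $(\tilde Y,F)\star(\tilde Y',F')=(\tilde Y\cap F^{-1}(\tilde Y'),F'\circ F)$, which is again a $C^\omega_\rho$-hyperbolic transformation. The implicit representation of a $C^\omega_\rho$-hyperbolic transformation $(\tilde Y,F)$ is the pair of holomorphic functions $(\mathcal Z_0,\mathcal W_1)$ on $\tilde I^2$ such that for $(z_0,w_0)\in\tilde Y$ and $(z_1,w_1)\in F(\tilde Y)$: $F(z_0,w_0)=(z_1,w_1)$ if and only if $z_0=\mathcal Z_0(z_1,w_0)$ and $w_1=\mathcal W_1(z_1,w_0)$. *)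

theory Defs
  imports "HOL-Analysis.Analysis"
begin

definition theta :: real where "theta = 1/2"
definition lam :: real where "lam = 2"

definition Ireal :: "real set" where "Ireal = {-1..1}"

definition Itil :: "real \<Rightarrow> complex set" where
  "Itil \<rho> = {z. Re z \<in> {-1..1} \<and> \<bar>Im z\<bar> \<le> \<rho>}"

definition Ye :: "real \<Rightarrow> (complex \<times> complex) set" where
  "Ye \<rho> = Itil \<rho> \<times> Itil \<rho>"

definition dsYe :: "real \<Rightarrow> (complex \<times> complex) set" where
  "dsYe \<rho> = frontier (Itil \<rho>) \<times> Itil \<rho>"

definition duYe :: "real \<Rightarrow> (complex \<times> complex) set" where
  "duYe \<rho> = Itil \<rho> \<times> frontier (Itil \<rho>)"

definition chi_h :: "(complex \<times> complex) set" where
  "chi_h = {u. cmod (snd u) < theta * cmod (fst u)}"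

definition chi_v :: "(complex \<times> complex) set" where
  "chi_v = {u. cmod (fst u) < theta * cmod (snd u)}"

definition cmul :: "complex \<Rightarrow> complex \<times> complex \<Rightarrow> complex \<times> complex" where
  "cmul c u = (c * fst u, c * snd u)"

text \<open>Holomorphy of a function of two complex variables on a (possibly closed) set S:
  complex (Frechet) differentiable, with C-linear derivative, on an open neighbourhood of S.\<close>
definition holo2_on :: "(complex \<times> complex \<Rightarrow> complex) \<Rightarrow> (complex \<times> complex) set \<Rightarrow> bool" where
  "holo2_on f S \<longleftrightarrow> (\<exists>U. open U \<and> S \<subseteq> U \<and>
     (\<forall>p\<in>U. \<exists>D. (f has_derivative D) (at p) \<and> (\<forall>c u. D (cmul c u) = c * D u)))"

definition holo_map_on :: "(complex \<times> complex \<Rightarrow> complex \<times> complex) \<Rightarrow> (complex \<times> complex) set \<Rightarrow> bool" where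
  "holo_map_on F S \<longleftrightarrow> holo2_on (\<lambda>p. fst (F p)) S \<and> holo2_on (\<lambda>p. snd (F p)) S"

definition biholo_on :: "(complex \<times> complex \<Rightarrow> complex \<times> complex) \<Rightarrow> (complex \<times> complex) set \<Rightarrow> bool" where
  "biholo_on F S \<longleftrightarrow> holo_map_on F S \<and> inj_on F S \<and>
     (\<exists>G. holo_map_on G (F ` S) \<and> (\<forall>p\<in>S. G (F p) = p))"

definition cpt :: "real \<times> real \<Rightarrow> complex \<times> complex" where
  "cpt p = (complex_of_real (fst p), complex_of_real (snd p))"

definition rpt :: "complex \<times> complex \<Rightarrow> real \<times> real" where
  "rpt q = (Re (fst q), Re (snd q))"

definition realpts :: "(complex \<times> complex) set \<Rightarrow> (real \<times> real) set" where
  "realpts Y = {p. cpt p \<in> Y}"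

definition real_box_data :: "(real \<times> real) set \<Rightarrow> (real \<Rightarrow> real) \<Rightarrow> (real \<Rightarrow> real) \<Rightarrow> bool" where
  "real_box_data Y phim phip \<longleftrightarrow>
     (\<exists>dm dp. continuous_on Ireal dm \<and> continuous_on Ireal dp \<and>
        (\<forall>y\<in>Ireal. (phim has_real_derivative dm y) (at y within Ireal) \<and>
                   (phip has_real_derivative dp y) (at y within Ireal) \<and>
                   \<bar>dm y\<bar> < theta \<and> \<bar>dp y\<bar> < theta)) \<and>
     (\<forall>y\<in>Ireal. phim y < phip y \<and> \<bar>phim y\<bar> \<le> 1 \<and> \<bar>phip y\<bar> \<le> 1) \<and>
     Y = {(x, y). x \<in> Ireal \<and> y \<in> Ireal \<and> phim y \<le> x \<and> x \<le> phip y}"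

definition real_box :: "(real \<times> real) set \<Rightarrow> bool" where
  "real_box Y \<longleftrightarrow> (\<exists>phim phip. real_box_data Y phim phip)"

definition rchi_h :: "(real \<times> real) set" where
  "rchi_h = {u. \<bar>snd u\<bar> < theta * \<bar>fst u\<bar>}"

definition rchi_v :: "(real \<times> real) set" where
  "rchi_v = {u. \<bar>fst u\<bar> < theta * \<bar>snd u\<bar>}"

definition rdsYe :: "(real \<times> real) set" where
  "rdsYe = {-1, 1} \<times> Ireal"

definition rduYe :: "(real \<times> real) set" where
  "rduYe = Ireal \<times> {-1, 1}"

definition real_hyp_conds :: "(real \<times> real) set \<Rightarrow> (real \<times> real \<Rightarrow> real \<times> real) \<Rightarrow> bool" where
  "real_hyp_conds Y f \<longleftrightarrow>
     (\<exists>phim phip g. real_box_data Y phim phip \<and> inj_on f Y \<and> (\<forall>p\<in>Y. g (f p) = p) \<and>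
        f ` Y \<subseteq> Ireal \<times> Ireal \<and>
        f ` {(x, y). (x, y) \<in> Y \<and> (x = phim y \<or> x = phip y)} \<subseteq> rdsYe \<and>
        Y \<inter> rdsYe = {} \<and> f ` Y \<inter> rduYe = {} \<and>
        (\<forall>p\<in>Y. f differentiable (at p within Y) \<and>
           (\<forall>D. (f has_derivative D) (at p within Y) \<longrightarrow>
              (\<forall>u. u \<noteq> 0 \<and> u \<notin> rchi_v \<longrightarrow> D u \<in> rchi_h \<and> \<bar>fst (D u)\<bar> > lam * \<bar>fst u\<bar>))) \<and>
        (\<forall>q\<in>f ` Y. g differentiable (at q within f ` Y) \<and>
           (\<forall>D. (g has_derivative D) (at q within f ` Y) \<longrightarrow>
              (\<forall>u. u \<noteq> 0 \<and> u \<notin> rchi_h \<longrightarrow> D u \<in> rchi_v \<and> \<bar>snd (D u)\<bar> > lam * \<bar>snd u\<bar>))))"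

definition zeta :: "(complex \<times> complex \<Rightarrow> complex) \<Rightarrow> complex \<times> complex \<Rightarrow> complex \<times> complex" where
  "zeta Z p = (Z p, snd p)"

definition omega_box_data :: "real \<Rightarrow> (complex \<times> complex \<Rightarrow> complex) \<Rightarrow> (complex \<times> complex) set \<Rightarrow> bool" where
  "omega_box_data \<rho> Z Y \<longleftrightarrow>
     biholo_on (zeta Z) (Ye \<rho>) \<and>
     (\<forall>z w. (z, w) \<in> Ye \<rho> \<longrightarrow> cmod (deriv (\<lambda>w'. Z (z, w')) w) < theta) \<and>
     Y = zeta Z ` Ye \<rho> \<and> real_box (realpts Y)"

definition hyp_tr :: "real \<Rightarrow> (complex \<times> complex) set \<Rightarrow> (complex \<times> complex \<Rightarrow> complex \<times> complex) \<Rightarrow> bool" where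
  "hyp_tr \<rho> Y F \<longleftrightarrow>
     (Y = Ye \<rho> \<and> F = id) \<or>
     (\<exists>Z G. omega_box_data \<rho> Z Y \<and>
        holo_map_on F Y \<and> inj_on F Y \<and> holo_map_on G (F ` Y) \<and> (\<forall>p\<in>Y. G (F p) = p) \<and>
        F ` Y \<subseteq> Ye \<rho> \<and>
        F ` (zeta Z ` (frontier (Itil \<rho>) \<times> Itil \<rho>)) \<subseteq> dsYe \<rho> \<and>
        Y \<inter> dsYe \<rho> = {} \<and> F ` Y \<inter> duYe \<rho> = {} \<and>
        (\<forall>p\<in>Y. \<forall>D. (F has_derivative D) (at p) \<longrightarrow>
           (\<forall>u. u \<noteq> 0 \<and> u \<notin> chi_v \<longrightarrow> D u \<in> chi_h \<and> cmod (fst (D u)) > lam * cmod (fst u))) \<and>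
        (\<forall>q\<in>F ` Y. \<forall>D. (G has_derivative D) (at q) \<longrightarrow>
           (\<forall>u. u \<noteq> 0 \<and> u \<notin> chi_h \<longrightarrow> D u \<in> chi_v \<and> cmod (snd (D u)) > lam * cmod (snd u))) \<and>
        (\<forall>p\<in>realpts Y. F (cpt p) = cpt (rpt (F (cpt p)))) \<and>
        real_hyp_conds (realpts Y) (\<lambda>p. rpt (F (cpt p))))"

definition implicit_rep :: "real \<Rightarrow> (complex \<times> complex) set \<Rightarrow> (complex \<times> complex \<Rightarrow> complex \<times> complex)
     \<Rightarrow> (complex \<times> complex \<Rightarrow> complex) \<Rightarrow> (complex \<times> complex \<Rightarrow> complex) \<Rightarrow> bool" where
  "implicit_rep \<rho> Y F Z0 W1 \<longleftrightarrow> holo2_on Z0 (Ye \<rho>) \<and> holo2_on W1 (Ye \<rho>) \<and>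
     (\<forall>z0 w0 z1 w1. (z0, w0) \<in> Y \<longrightarrow> (z1, w1) \<in> F ` Y \<longrightarrow>
        (F (z0, w0) = (z1, w1) \<longleftrightarrow> z0 = Z0 (z1, w0) \<and> w1 = W1 (z1, w0)))"

text \<open>The star product: (Y \<inter> F^-1(Y'), F' o F).\<close>
definition star_dom :: "(complex \<times> complex) set \<Rightarrow> (complex \<times> complex \<Rightarrow> complex \<times> complex)
     \<Rightarrow> (complex \<times> complex) set \<Rightarrow> (complex \<times> complex) set" where
  "star_dom Y F Y' = {p \<in> Y. F p \<in> Y'}"

end

(*
  For a hyperbolic transformation whose derivative at (z0, w0) has matrix [[P, Q], [R, S]], the
  implicit representation satisfies d/dz Z0 = 1/P and d/dw W1 = (PS - QR)/P at (z1, w0). This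
  follows by differentiating the identities z0 = Z0 (z1, w0), w1 = W1 (z1, w0) along a chart of
  the domain of the form x \<mapsto> (pf x, snd x); for a box such a chart is its parametrisation, and
  for the domain of a star product it is produced by a one-variable holomorphic implicit function
  theorem (via the minimum modulus principle). For the composite the first entry of the
  derivative is P'P + Q'R and determinants multiply, so both ratios in the theorem equal
  |P P'| / |P'P + Q'R|, while the cone conditions give |Q'R| \<le> theta^2 |P P'|.
*)
theory Submission
  imports Defs "HOL-Complex_Analysis.Complex_Analysis"
begin

section \<open>Complex-linear maps of the plane\<close>

definition cmul_linear :: "(complex \<times> complex \<Rightarrow> complex \<times> complex) \<Rightarrow> bool" where
  "cmul_linear D \<longleftrightarrow> (\<forall>c u. D (cmul c u) = cmul c (D u))"

definition det2 :: "(complex \<times> complex \<Rightarrow> complex \<times> complex) \<Rightarrow> complex" where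
  "det2 D = fst (D (1,0)) * snd (D (0,1)) - fst (D (0,1)) * snd (D (1,0))"

lemma pair_eq_cmul_basis: "(a, b) = cmul a (1,0) + cmul b (0,1)"
  by (simp add: cmul_def)

lemma cmul_Pair: "cmul c (x, y) = (c * x, c * y)"
  by (simp add: cmul_def)

lemma linear_Pair_split:
  assumes "linear D"
  shows "D (a, v) = D (a, 0) + D (0, v)"
  using linear_add[OF assms, of "(a, 0)" "(0, v)"] by simp

lemma linear_cmul_scalar_apply:
  assumes "linear D" "\<forall>c u. D (cmul c u) = c * D u"
  shows "D (a, b) = a * D (1,0) + b * D (0,1)"
  using assms by (metis linear_add pair_eq_cmul_basis)

lemma cmul_linear_apply:
  assumes "linear D" "cmul_linear D"
  shows "D (a, b) = (a * fst (D (1,0)) + b * fst (D (0,1)), a * snd (D (1,0)) + b * snd (D (0,1)))"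
proof -
  have "D (a, b) = cmul a (D (1,0)) + cmul b (D (0,1))"
    using assms unfolding cmul_linear_def by (metis linear_add pair_eq_cmul_basis)
  then show ?thesis by (simp add: cmul_def)
qed

lemma cmul_linear_comp:
  assumes "cmul_linear D" "cmul_linear D'"
  shows "cmul_linear (D' \<circ> D)"
  unfolding cmul_linear_def
proof (intro allI)
  fix c u
  have "D (cmul c u) = cmul c (D u)" "D' (cmul c (D u)) = cmul c (D' (D u))"
    using assms unfolding cmul_linear_def by blast+
  then show "(D' \<circ> D) (cmul c u) = cmul c ((D' \<circ> D) u)" by simp
qed

lemma det2_comp:
  assumes "linear D" "cmul_linear D" "linear D'" "cmul_linear D'"
  shows "det2 (D' \<circ> D) = det2 D' * det2 D"
proof -
  have "D' (D u) = (fst (D u) * fst (D' (1,0)) + snd (D u) * fst (D' (0,1)),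
                   fst (D u) * snd (D' (1,0)) + snd (D u) * snd (D' (0,1)))" for u
    using cmul_linear_apply[OF assms(3,4), of "fst (D u)" "snd (D u)"] by simp
  then show ?thesis unfolding det2_def comp_def by (simp add: algebra_simps)
qed

section \<open>Holomorphic maps of two variables\<close>

lemma has_field_derivative_fst_slice:
  assumes "(f has_derivative D) (at (z, w))" "\<forall>c u. D (cmul c u) = c * D u"
  shows "((\<lambda>z'. f (z', w)) has_field_derivative D (1,0)) (at z)"
proof -
  have "((\<lambda>z'. f (z', w)) has_derivative (\<lambda>h. D (h, 0))) (at z)"
    using has_derivative_compose[OF has_derivative_Pair[OF has_derivative_ident has_derivative_const]
        assms(1)] by simp
  moreover have "(\<lambda>h. D (h, 0)) = (*) (D (1,0))"
  proof
    fix h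
    show "D (h, 0) = D (1,0) * h"
      using linear_cmul_scalar_apply[OF has_derivative_linear[OF assms(1)] assms(2), of h 0]
      by (simp add: mult.commute)
  qed
  ultimately show ?thesis by (simp add: has_field_derivative_def)
qed

lemma has_field_derivative_snd_slice:
  assumes "(f has_derivative D) (at (z, w))" "\<forall>c u. D (cmul c u) = c * D u"
  shows "((\<lambda>w'. f (z, w')) has_field_derivative D (0,1)) (at w)"
proof -
  have "((\<lambda>w'. f (z, w')) has_derivative (\<lambda>h. D (0, h))) (at w)"
    using has_derivative_compose[OF has_derivative_Pair[OF has_derivative_const has_derivative_ident]
        assms(1)] by simp
  moreover have "(\<lambda>h. D (0, h)) = (*) (D (0,1))"
  proof
    fix h
    show "D (0, h) = D (0,1) * h"
      using linear_cmul_scalar_apply[OF has_derivative_linear[OF assms(1)] assms(2), of 0 h]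
      by (simp add: mult.commute)
  qed
  ultimately show ?thesis by (simp add: has_field_derivative_def)
qed

lemma holo2_onE:
  assumes "holo2_on f S"
  obtains U where "open U" "S \<subseteq> U"
    "\<forall>q\<in>U. \<exists>D. (f has_derivative D) (at q) \<and> (\<forall>c u. D (cmul c u) = c * D u)"
  using assms unfolding holo2_on_def by (elim exE conjE) (rule that)

lemma holo2_on_derivative_cmul:
  assumes "holo2_on f S" "p \<in> S" "(f has_derivative D) (at p)"
  shows "\<forall>c u. D (cmul c u) = c * D u"
proof -
  obtain U where U: "S \<subseteq> U"
    "\<forall>q\<in>U. \<exists>D. (f has_derivative D) (at q) \<and> (\<forall>c u. D (cmul c u) = c * D u)"
    using assms(1) by (rule holo2_onE)
  then obtain D' where "(f has_derivative D') (at p)" "\<forall>c u. D' (cmul c u) = c * D' u"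
    using assms(2) by blast
  then show ?thesis using has_derivative_unique[OF assms(3)] by simp
qed

lemma holo2_on_has_derivative:
  assumes "holo2_on f S" "p \<in> S"
  obtains D where "(f has_derivative D) (at p)" "\<forall>c u. D (cmul c u) = c * D u"
proof -
  obtain U where "S \<subseteq> U"
    "\<forall>q\<in>U. \<exists>D. (f has_derivative D) (at q) \<and> (\<forall>c u. D (cmul c u) = c * D u)"
    using assms(1) by (rule holo2_onE)
  then show ?thesis using assms(2) that by blast
qed

lemma holo2_on_subset: "holo2_on f S \<Longrightarrow> T \<subseteq> S \<Longrightarrow> holo2_on f T"
  unfolding holo2_on_def by (meson subset_trans)

lemma holo_map_onD:
  assumes "holo_map_on F S"
  shows "\<exists>U. open U \<and> S \<subseteq> U \<and> (\<forall>q\<in>U. \<exists>D. (F has_derivative D) (at q) \<and> cmul_linear D)"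
proof -
  have holo_fst: "holo2_on (\<lambda>p. fst (F p)) S" and holo_snd: "holo2_on (\<lambda>p. snd (F p)) S"
    using assms unfolding holo_map_on_def by auto
  obtain U1 where U1: "open U1" "S \<subseteq> U1"
    and D1: "\<forall>q\<in>U1. \<exists>D. ((\<lambda>p. fst (F p)) has_derivative D) (at q) \<and> (\<forall>c u. D (cmul c u) = c * D u)"
    using holo_fst by (rule holo2_onE)
  obtain U2 where U2: "open U2" "S \<subseteq> U2"
    and D2: "\<forall>q\<in>U2. \<exists>D. ((\<lambda>p. snd (F p)) has_derivative D) (at q) \<and> (\<forall>c u. D (cmul c u) = c * D u)"
    using holo_snd by (rule holo2_onE)
  have "\<exists>D. (F has_derivative D) (at q) \<and> cmul_linear D" if q: "q \<in> U1 \<inter> U2" for q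
  proof -
    obtain D1' where D1': "((\<lambda>p. fst (F p)) has_derivative D1') (at q)" "\<forall>c u. D1' (cmul c u) = c * D1' u"
      using D1 q by blast
    obtain D2' where D2': "((\<lambda>p. snd (F p)) has_derivative D2') (at q)" "\<forall>c u. D2' (cmul c u) = c * D2' u"
      using D2 q by blast
    have "(F has_derivative (\<lambda>u. (D1' u, D2' u))) (at q)"
      using has_derivative_Pair[OF D1'(1) D2'(1)] by simp
    moreover have "cmul_linear (\<lambda>u. (D1' u, D2' u))"
      unfolding cmul_linear_def
    proof (intro allI)
      fix c u
      have "D1' (cmul c u) = c * D1' u" "D2' (cmul c u) = c * D2' u"
        using D1'(2) D2'(2) by blast+
      then show "(D1' (cmul c u), D2' (cmul c u)) = cmul c (D1' u, D2' u)"
        by (simp only: cmul_Pair)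
    qed
    ultimately show ?thesis by blast
  qed
  then show ?thesis
    using U1 U2 by (intro exI[of _ "U1 \<inter> U2"]) auto
qed

lemma holo_map_onI:
  assumes U: "open U" "S \<subseteq> U" "\<forall>q\<in>U. \<exists>D. (F has_derivative D) (at q) \<and> cmul_linear D"
  shows "holo_map_on F S"
proof -
  have fst_snd: "(\<exists>D. ((\<lambda>p. fst (F p)) has_derivative D) (at q) \<and> (\<forall>c u. D (cmul c u) = c * D u)) \<and>
        (\<exists>D. ((\<lambda>p. snd (F p)) has_derivative D) (at q) \<and> (\<forall>c u. D (cmul c u) = c * D u))"
    if q: "q \<in> U" for q
  proof -
    obtain D where D: "(F has_derivative D) (at q)" "cmul_linear D" using U(3) q by blast
    have "fst (D (cmul c u)) = c * fst (D u)" "snd (D (cmul c u)) = c * snd (D u)" for c u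
      using D(2) unfolding cmul_linear_def cmul_def by simp_all
    then show ?thesis
      using has_derivative_fst[OF D(1)] has_derivative_snd[OF D(1)] by blast
  qed
  show ?thesis
    unfolding holo_map_on_def holo2_on_def
    by (intro conjI exI[of _ U]) (use U(1,2) fst_snd in auto)
qed

lemma holo_map_on_iff:
  "holo_map_on F S \<longleftrightarrow>
     (\<exists>U. open U \<and> S \<subseteq> U \<and> (\<forall>q\<in>U. \<exists>D. (F has_derivative D) (at q) \<and> cmul_linear D))"
  by (meson holo_map_onD holo_map_onI)

lemma holo_map_on_has_derivative:
  assumes "holo_map_on F S" "p \<in> S"
  obtains D where "(F has_derivative D) (at p)" "cmul_linear D"
  using assms unfolding holo_map_on_iff by blast

lemma holo_map_on_derivative_cmul_linear:
  assumes "holo_map_on F S" "p \<in> S" "(F has_derivative D) (at p)"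
  shows "cmul_linear D"
  using holo_map_on_has_derivative[OF assms(1,2)] has_derivative_unique assms(3) by metis

lemma holo_map_on_compose:
  assumes F: "holo_map_on F S" and G: "holo_map_on G T" and "F ` S \<subseteq> T"
  shows "holo_map_on (G \<circ> F) S"
proof -
  obtain U where U: "open U" "S \<subseteq> U" "\<forall>q\<in>U. \<exists>D. (F has_derivative D) (at q) \<and> cmul_linear D"
    using F unfolding holo_map_on_iff by blast
  obtain V where V: "open V" "T \<subseteq> V" "\<forall>q\<in>V. \<exists>D. (G has_derivative D) (at q) \<and> cmul_linear D"
    using G unfolding holo_map_on_iff by blast
  have "isCont F q" if q: "q \<in> U" for q
  proof -
    obtain D where "(F has_derivative D) (at q)" using U(3) q by blast
    then show ?thesis by (rule has_derivative_continuous)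
  qed
  then have "continuous_on U F"
    by (intro continuous_at_imp_continuous_on) blast
  then have "open (F -` V \<inter> U)"
    using continuous_on_open_vimage[OF U(1), of F] V(1) by blast
  moreover have "\<exists>D. (G \<circ> F has_derivative D) (at q) \<and> cmul_linear D" if q: "q \<in> F -` V \<inter> U" for q
  proof -
    obtain D where D: "(F has_derivative D) (at q)" "cmul_linear D" using U(3) q by blast
    obtain D' where D': "(G has_derivative D') (at (F q))" "cmul_linear D'" using V(3) q by blast
    show ?thesis
      using has_derivative_compose[OF D(1) D'(1)] cmul_linear_comp[OF D(2) D'(2)]
      by (auto simp: comp_def)
  qed
  ultimately show ?thesis
    unfolding holo_map_on_iff using U(2) V(2) assms(3) by (intro exI[of _ "F -` V \<inter> U"]) blast
qed

lemma holo_map_on_id: "holo_map_on (\<lambda>p. p) S"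
  unfolding holo_map_on_iff
  by (intro exI[of _ UNIV]) (auto intro: has_derivative_ident simp: cmul_linear_def)

lemma zeta_has_derivative:
  "(Z has_derivative D) (at q) \<Longrightarrow> (zeta Z has_derivative (\<lambda>u. (D u, snd u))) (at q)"
  unfolding zeta_def by (intro has_derivative_Pair has_derivative_snd has_derivative_ident)

lemma holo_map_on_zeta: "holo2_on Z S \<Longrightarrow> holo_map_on (zeta Z) S"
proof -
  have "holo2_on snd S"
    unfolding holo2_on_def
    by (intro exI[of _ UNIV]) (auto intro!: exI[of _ snd] has_derivative_snd has_derivative_ident
        simp: cmul_def)
  then show "holo2_on Z S \<Longrightarrow> holo_map_on (zeta Z) S"
    by (simp add: holo_map_on_def zeta_def)
qed

lemma has_derivative_eventually_in_open:
  assumes "(f has_derivative D) (at x)" "open S" "f x \<in> S"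
  shows "\<forall>\<^sub>F y in nhds x. f y \<in> S"
proof -
  have "(f \<longlongrightarrow> f x) (nhds x)"
    using has_derivative_continuous[OF assms(1)] unfolding continuous_at tendsto_at_iff_tendsto_nhds .
  then show ?thesis using assms(2,3) by (rule topological_tendstoD)
qed

section \<open>The closed box\<close>

lemma Itil_cbox: "Itil \<rho> = cbox (Complex (-1) (-\<rho>)) (Complex 1 \<rho>)"
  by (auto simp: Itil_def in_cbox_complex_iff)

lemma Ye_cbox: "Ye \<rho> = cbox (Complex (-1) (-\<rho>), Complex (-1) (-\<rho>)) (Complex 1 \<rho>, Complex 1 \<rho>)"
  by (simp add: Ye_def Itil_cbox cbox_Pair_eq)

lemma Itil_interiorI:
  assumes "z \<in> Itil \<rho>" "z \<notin> frontier (Itil \<rho>)"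
  shows "z \<in> interior (Itil \<rho>)"
proof -
  have "closed (Itil \<rho>)" by (simp add: Itil_cbox closed_cbox)
  then show ?thesis using assms by (simp add: frontier_def)
qed

text \<open>Points of the closed box may lie on its boundary, but the box has nonempty interior,
  so derivatives within it are still unique.\<close>
lemma has_derivative_unique_on_Ye:
  assumes "\<rho> > 0" "x0 \<in> Ye \<rho>" "\<forall>\<^sub>F x in nhds x0. x \<in> Ye \<rho> \<longrightarrow> f x = g x"
    and "(f has_derivative Df) (at x0)" "(g has_derivative Dg) (at x0)"
  shows "Df = Dg"
proof -
  obtain d where d: "d > 0" "\<And>x. dist x x0 < d \<Longrightarrow> x \<in> Ye \<rho> \<Longrightarrow> f x = g x"
    using assms(3) unfolding eventually_nhds_metric by blast
  have "(g has_derivative Df) (at x0 within Ye \<rho>)"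
    using has_derivative_transform_within[OF has_derivative_at_withinI[OF assms(4)] d(1) assms(2)] d(2)
    by blast
  moreover have "(g has_derivative Dg) (at x0 within Ye \<rho>)"
    using assms(5) by (rule has_derivative_at_withinI)
  moreover have "(Complex (-1) (-\<rho>), Complex (-1) (-\<rho>)) \<bullet> i < (Complex 1 \<rho>, Complex 1 \<rho>) \<bullet> i"
    if "i \<in> Basis" for i
    using that assms(1) by (auto simp: Basis_prod_def Basis_complex_def inner_complex_def)
  ultimately show ?thesis
    using frechet_derivative_unique_within_closed_interval assms(2) unfolding Ye_cbox by blast
qed

section \<open>A holomorphic implicit function theorem\<close>

lemma holomorphic_has_zero_in_ball:
  assumes hol: "f holomorphic_on cball z0 r" and r: "r > 0"
    and sphere: "\<And>z. z \<in> sphere z0 r \<Longrightarrow> m \<le> cmod (f z)"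
    and centre: "cmod (f z0) < m"
  shows "\<exists>z\<in>ball z0 r. f z = 0"
proof (rule ccontr)
  assume no_zero: "\<not> (\<exists>z\<in>ball z0 r. f z = 0)"
  have m: "m > 0"
    using centre norm_ge_zero[of "f z0"] by linarith
  have nonzero: "f z \<noteq> 0" if z: "z \<in> cball z0 r" for z
  proof (cases "z \<in> ball z0 r")
    case False
    with z have "z \<in> sphere z0 r" by simp
    then show ?thesis using sphere[of z] m by auto
  qed (use no_zero in blast)
  have inv_hol: "(\<lambda>z. inverse (f z)) holomorphic_on cball z0 r"
    using hol nonzero by (rule holomorphic_on_inverse)
  have "cmod (inverse (f z0)) \<le> inverse m"
  proof (rule maximum_modulus_frontier[of "\<lambda>z. inverse (f z)" "cball z0 r" "inverse m" z0])
    show "(\<lambda>z. inverse (f z)) holomorphic_on interior (cball z0 r)"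
      using inv_hol by (rule holomorphic_on_subset) auto
    show "continuous_on (closure (cball z0 r)) (\<lambda>z. inverse (f z))"
      using inv_hol holomorphic_on_imp_continuous_on by auto
    show "cmod (inverse (f z)) \<le> inverse m" if "z \<in> frontier (cball z0 r)" for z
      using that sphere[of z] m by (simp add: norm_inverse le_imp_inverse_le)
  qed (use r in auto)
  moreover have "inverse m < cmod (inverse (f z0))"
    using centre nonzero[of z0] r by (simp add: norm_inverse less_imp_inverse_less)
  ultimately show False by linarith
qed

lemma has_derivative_Pair_approx:
  fixes \<Phi> :: "complex \<Rightarrow> 'a::real_normed_vector \<Rightarrow> complex"
  assumes der: "((\<lambda>y. \<Phi> (fst y) (snd y)) has_derivative D\<Phi>) (at (z0, x0))"
    and D\<Phi>_fst: "\<And>a. D\<Phi> (a, 0) = a * c" and e: "e > 0"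
  shows "\<exists>d>0. \<forall>z x. cmod (z - z0) < d \<longrightarrow> norm (x - x0) < d \<longrightarrow>
      cmod (\<Phi> z x - \<Phi> z0 x0 - c * (z - z0) - D\<Phi> (0, x - x0)) \<le> e * (cmod (z - z0) + norm (x - x0))"
proof -
  obtain d where d: "d > 0" and approx: "\<And>y. norm (y - (z0, x0)) < d \<Longrightarrow>
      norm (\<Phi> (fst y) (snd y) - \<Phi> z0 x0 - D\<Phi> (y - (z0, x0))) \<le> e * norm (y - (z0, x0))"
    using der e unfolding has_derivative_at_alt by force
  have split: "D\<Phi> (a, v) = c * a + D\<Phi> (0, v)" for a v
    using linear_Pair_split[OF has_derivative_linear[OF der], of a v] D\<Phi>_fst by (simp add: mult.commute)
  show ?thesis
  proof (intro exI[of _ "d/2"] conjI allI impI)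
    show "d/2 > 0" using d by simp
    fix z x assume "cmod (z - z0) < d/2" "norm (x - x0) < d/2"
    moreover have n: "norm ((z, x) - (z0, x0)) \<le> cmod (z - z0) + norm (x - x0)"
      using norm_Pair_le[of "z - z0" "x - x0"] by simp
    ultimately have "norm ((z, x) - (z0, x0)) < d" by linarith
    from approx[OF this]
    have "cmod (\<Phi> z x - \<Phi> z0 x0 - c * (z - z0) - D\<Phi> (0, x - x0)) \<le> e * norm ((z, x) - (z0, x0))"
      by (simp add: split[of "z - z0" "x - x0"] diff_diff_eq add.assoc)
    also have "\<dots> \<le> e * (cmod (z - z0) + norm (x - x0))"
      using n e by (intro mult_left_mono) auto
    finally show "cmod (\<Phi> z x - \<Phi> z0 x0 - c * (z - z0) - D\<Phi> (0, x - x0))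
        \<le> e * (cmod (z - z0) + norm (x - x0))" .
  qed
qed

lemma holomorphic_near_linear_has_zero:
  assumes hol: "f holomorphic_on cball z0 r" and r: "r > 0"
    and near_linear: "\<And>z. z \<in> cball z0 r \<Longrightarrow> cmod (f z - c * (z - z0)) \<le> cmod c * cmod (z - z0) / 4 + e"
    and small: "2 * e < 3/4 * (cmod c * r)"
  shows "\<exists>z\<in>ball z0 r. f z = 0"
proof (rule holomorphic_has_zero_in_ball[OF hol r, where m = "3/4 * (cmod c * r) - e"])
  show "3/4 * (cmod c * r) - e \<le> cmod (f z)" if z: "z \<in> sphere z0 r" for z
  proof -
    have "cmod (z - z0) = r" using z by (simp add: dist_norm norm_minus_commute)
    moreover have "cmod (c * (z - z0)) - cmod (f z) \<le> cmod (f z - c * (z - z0))"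
      using norm_triangle_ineq2[of "c * (z - z0)" "f z"] by (simp add: norm_minus_commute)
    ultimately show ?thesis using near_linear[of z] z by (simp add: norm_mult)
  qed
  show "cmod (f z0) < 3/4 * (cmod c * r) - e"
    using near_linear[of z0] r small by simp
qed

lemma eventually_nhds_Pair_radius:
  fixes a :: "'a::real_normed_vector" and b :: "'b::real_normed_vector"
  assumes "\<forall>\<^sub>F y in nhds (a, b). P y"
  obtains d where "d > 0" "\<And>x y. norm (x - a) < d \<Longrightarrow> norm (y - b) < d \<Longrightarrow> P (x, y)"
proof -
  obtain e where e: "e > 0" "\<And>y. dist y (a, b) < e \<Longrightarrow> P y"
    using assms unfolding eventually_nhds_metric by blast
  have "P (x, y)" if "norm (x - a) < e/2" "norm (y - b) < e/2" for x y
  proof (rule e(2))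
    have "dist (x, y) (a, b) \<le> norm (x - a) + norm (y - b)"
      using norm_Pair_le[of "x - a" "y - b"] by (simp add: dist_norm)
    with that show "dist (x, y) (a, b) < e" by simp
  qed
  moreover have "e/2 > 0" using e(1) by simp
  ultimately show ?thesis using that by blast
qed

lemma has_derivative_Pair_near_linear:
  fixes \<Phi> :: "complex \<Rightarrow> 'a::real_normed_vector \<Rightarrow> complex"
  assumes der: "((\<lambda>y. \<Phi> (fst y) (snd y)) has_derivative D\<Phi>) (at (z0, x0))"
    and D\<Phi>_fst: "\<And>a. D\<Phi> (a, 0) = a * c" and zero: "\<Phi> z0 x0 = 0" and e: "e > 0"
  obtains d A where "d > 0" "A > 0" "\<And>z x. cmod (z - z0) < d \<Longrightarrow> norm (x - x0) < d \<Longrightarrow>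
      cmod (\<Phi> z x - c * (z - z0)) \<le> e * cmod (z - z0) + A * norm (x - x0)"
proof -
  obtain B where B: "B > 0" "\<And>v. cmod (D\<Phi> (0, v)) \<le> B * norm v"
  proof -
    obtain K where K: "K > 0" "\<And>y. norm (D\<Phi> y) \<le> norm y * K"
      using bounded_linear.pos_bounded[OF has_derivative_bounded_linear[OF der]] by blast
    have "cmod (D\<Phi> (0, v)) \<le> K * norm v" for v
      using K(2)[of "(0, v)"] by (simp add: norm_Pair mult.commute)
    with K(1) show ?thesis by (rule that)
  qed
  obtain d where d: "d > 0" and approx: "\<forall>z x. cmod (z - z0) < d \<longrightarrow> norm (x - x0) < d \<longrightarrow>
      cmod (\<Phi> z x - c * (z - z0) - D\<Phi> (0, x - x0)) \<le> e * (cmod (z - z0) + norm (x - x0))"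
    using has_derivative_Pair_approx[OF der D\<Phi>_fst e] zero by auto
  have "cmod (\<Phi> z x - c * (z - z0)) \<le> e * cmod (z - z0) + (B + e) * norm (x - x0)"
    if "cmod (z - z0) < d" "norm (x - x0) < d" for z x
  proof -
    have "cmod (\<Phi> z x - c * (z - z0))
        \<le> cmod (\<Phi> z x - c * (z - z0) - D\<Phi> (0, x - x0)) + cmod (D\<Phi> (0, x - x0))"
      using norm_triangle_ineq[of "\<Phi> z x - c * (z - z0) - D\<Phi> (0, x - x0)" "D\<Phi> (0, x - x0)"] by simp
    then show ?thesis
      using approx that B(2)[of "x - x0"] by (fastforce simp: algebra_simps)
  qed
  moreover have "B + e > 0" using B e by simp
  ultimately show ?thesis using d that by blast
qed

lemma holomorphic_implicit_function_lipschitz: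
  fixes \<Phi> :: "complex \<Rightarrow> 'a::real_normed_vector \<Rightarrow> complex"
  assumes der: "((\<lambda>y. \<Phi> (fst y) (snd y)) has_derivative D\<Phi>) (at (z0, x0))"
    and c: "c \<noteq> 0" and D\<Phi>_fst: "\<And>a. D\<Phi> (a, 0) = a * c"
    and zero: "\<Phi> z0 x0 = 0"
    and hol: "\<forall>\<^sub>F y in nhds (z0, x0). (\<lambda>z. \<Phi> z (snd y)) field_differentiable at (fst y)"
  obtains g K where "K \<ge> 0" "g x0 = z0"
    "\<forall>\<^sub>F x in nhds x0. \<Phi> (g x) x = 0 \<and> cmod (g x - z0) \<le> K * norm (x - x0)"
proof -
  obtain d1 A where d1: "d1 > 0" and A: "A > 0" and near_linear: "\<And>z x. cmod (z - z0) < d1 \<Longrightarrow>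
      norm (x - x0) < d1 \<Longrightarrow> cmod (\<Phi> z x - c * (z - z0)) \<le> cmod c * cmod (z - z0) / 4 + A * norm (x - x0)"
    using has_derivative_Pair_near_linear[OF der D\<Phi>_fst zero, of "cmod c / 4"] c by auto
  obtain dh where dh: "dh > 0"
    and holD: "\<And>z x. cmod (z - z0) < dh \<Longrightarrow> norm (x - x0) < dh \<Longrightarrow> (\<lambda>z. \<Phi> z x) field_differentiable at z"
    using eventually_nhds_Pair_radius[OF hol] by (metis fst_conv snd_conv)
  define r where "r = min d1 dh / 2"
  have r: "r > 0" "r < d1" "r < dh" using d1 dh by (auto simp: r_def)
  define \<eta> where "\<eta> = min r (cmod c * r / (4 * A))"
  have \<eta>: "\<eta> > 0" "\<eta> \<le> r" using r c A by (auto simp: \<eta>_def)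
  have A\<eta>: "A * \<eta> \<le> cmod c * r / 4"
  proof -
    have "A * \<eta> \<le> A * (cmod c * r / (4 * A))" using A by (intro mult_left_mono) (auto simp: \<eta>_def)
    then show ?thesis using A by simp
  qed
  have ex: "\<exists>z. cmod (z - z0) < r \<and> \<Phi> z x = 0" if x: "norm (x - x0) < \<eta>" for x
  proof -
    have "(\<lambda>z. \<Phi> z x) field_differentiable at z" if "z \<in> cball z0 r" for z
      using that holD[of z x] r \<eta> x by (simp add: dist_norm norm_minus_commute)
    then have "(\<lambda>z. \<Phi> z x) holomorphic_on cball z0 r"
      by (simp add: holomorphic_on_def field_differentiable_at_within)
    moreover have "cmod (\<Phi> z x - c * (z - z0)) \<le> cmod c * cmod (z - z0) / 4 + A * norm (x - x0)"
      if "z \<in> cball z0 r" for z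
      using that near_linear[of z x] r \<eta> x by (simp add: dist_norm norm_minus_commute)
    moreover have "2 * (A * norm (x - x0)) < 3/4 * (cmod c * r)"
    proof -
      have "A * norm (x - x0) < A * \<eta>" using x A by simp
      moreover have "cmod c * r > 0" using c r by simp
      ultimately show ?thesis using A\<eta> by linarith
    qed
    ultimately obtain z where "z \<in> ball z0 r" "\<Phi> z x = 0"
      using holomorphic_near_linear_has_zero[OF _ r(1)] by blast
    then show ?thesis by (auto simp: dist_norm norm_minus_commute)
  qed
  define K where "K = 4 * A / (3 * cmod c)"
  have K: "K \<ge> 0" using A by (simp add: K_def)
  have bound: "cmod (z - z0) \<le> K * norm (x - x0)"
    if "cmod (z - z0) < r" "norm (x - x0) < \<eta>" "\<Phi> z x = 0" for z x
  proof -
    have "cmod c * cmod (z - z0) \<le> cmod c * cmod (z - z0) / 4 + A * norm (x - x0)"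
      using near_linear[of z x] that r \<eta> by (simp add: norm_mult)
    then show ?thesis using c by (simp add: K_def field_simps)
  qed
  text \<open>Any choice of zeros will do, since near_linear bounds every zero in the disc.\<close>
  define g where "g x = (SOME z. cmod (z - z0) < r \<and> \<Phi> z x = 0)" for x
  have g: "cmod (g x - z0) < r \<and> \<Phi> (g x) x = 0" if "norm (x - x0) < \<eta>" for x
    unfolding g_def using someI_ex[OF ex[OF that]] .
  have "g x0 = z0" using bound[of "g x0" x0] g[of x0] \<eta> by simp
  moreover have "\<forall>\<^sub>F x in nhds x0. x \<in> ball x0 \<eta>"
    by (rule eventually_nhds_ball[OF \<eta>(1)])
  then have "\<forall>\<^sub>F x in nhds x0. \<Phi> (g x) x = 0 \<and> cmod (g x - z0) \<le> K * norm (x - x0)"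
  proof (rule eventually_mono)
    fix x assume "x \<in> ball x0 \<eta>"
    then have x: "norm (x - x0) < \<eta>" by (simp add: dist_norm norm_minus_commute)
    show "\<Phi> (g x) x = 0 \<and> cmod (g x - z0) \<le> K * norm (x - x0)"
      using g[OF x] bound[of "g x" x] x by blast
  qed
  ultimately show ?thesis using K that by blast
qed

lemma implicit_function_has_derivative:
  fixes \<Phi> :: "complex \<Rightarrow> 'a::real_normed_vector \<Rightarrow> complex"
  assumes der: "((\<lambda>y. \<Phi> (fst y) (snd y)) has_derivative D\<Phi>) (at (z0, x0))"
    and c: "c \<noteq> 0" and D\<Phi>_fst: "\<And>a. D\<Phi> (a, 0) = a * c"
    and g0: "g x0 = z0" and K: "K \<ge> 0"
    and sol: "\<forall>\<^sub>F x in nhds x0. \<Phi> (g x) x = 0 \<and> cmod (g x - z0) \<le> K * norm (x - x0)"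
  shows "(g has_derivative (\<lambda>v. - D\<Phi> (0, v) / c)) (at x0)"
  unfolding has_derivative_at_alt
proof (intro conjI allI impI)
  have "bounded_linear (\<lambda>v. D\<Phi> (0, v))"
    using bounded_linear_compose[OF has_derivative_bounded_linear[OF der]
        bounded_linear_Pair[OF bounded_linear_zero bounded_linear_ident]] by simp
  then show "bounded_linear (\<lambda>v. - D\<Phi> (0, v) / c)"
    using bounded_linear_compose[OF bounded_linear_divide[of c] bounded_linear_minus] by simp
  fix e :: real assume e: "e > 0"
  have zero: "\<Phi> z0 x0 = 0"
    using eventually_nhds_x_imp_x[OF sol] g0 by simp
  define e2 where "e2 = e * cmod c / (K + 1)"
  have e2: "e2 > 0" using e c K by (simp add: e2_def)
  obtain d2 where d2: "d2 > 0" and lin: "\<And>z x. cmod (z - z0) < d2 \<Longrightarrow> norm (x - x0) < d2 \<Longrightarrow>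
      cmod (\<Phi> z x - c * (z - z0) - D\<Phi> (0, x - x0)) \<le> e2 * (cmod (z - z0) + norm (x - x0))"
    using has_derivative_Pair_approx[OF der D\<Phi>_fst e2] zero by auto
  obtain \<eta> where \<eta>: "\<eta> > 0"
    and sol_\<eta>: "\<And>x. norm (x - x0) < \<eta> \<Longrightarrow> \<Phi> (g x) x = 0 \<and> cmod (g x - z0) \<le> K * norm (x - x0)"
    using sol unfolding eventually_nhds_metric dist_norm by blast
  show "\<exists>d>0. \<forall>y. norm (y - x0) < d \<longrightarrow>
      cmod (g y - g x0 - - D\<Phi> (0, y - x0) / c) \<le> e * norm (y - x0)"
  proof (intro exI[of _ "min \<eta> (d2 / (K + 1))"] conjI allI impI)
    show "min \<eta> (d2 / (K + 1)) > 0" using \<eta> d2 K by simp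
    fix y assume y: "norm (y - x0) < min \<eta> (d2 / (K + 1))"
    define n where "n = norm (y - x0)"
    have n: "n \<ge> 0" "n + K * n < d2" "K * n \<ge> 0" using y K by (auto simp: n_def field_simps)
    have gy: "\<Phi> (g y) y = 0" "cmod (g y - z0) \<le> K * n" using sol_\<eta>[of y] y by (auto simp: n_def)
    have "cmod (g y - z0) < d2" "norm (y - x0) < d2"
      using gy(2) n unfolding n_def[symmetric] by linarith+
    then have "cmod (\<Phi> (g y) y - c * (g y - z0) - D\<Phi> (0, y - x0)) \<le> e2 * (cmod (g y - z0) + n)"
      unfolding n_def by (rule lin)
    moreover have "\<Phi> (g y) y - c * (g y - z0) - D\<Phi> (0, y - x0) = - (c * (g y - z0) + D\<Phi> (0, y - x0))"
      using gy(1) by simp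
    ultimately have "cmod (c * (g y - z0) + D\<Phi> (0, y - x0)) \<le> e2 * (cmod (g y - z0) + n)"
      by (simp only: norm_minus_cancel)
    also have "\<dots> \<le> e2 * ((K + 1) * n)"
      using gy(2) e2 by (intro mult_left_mono) (auto simp: algebra_simps)
    also have "\<dots> = cmod c * (e * n)" using K by (simp add: e2_def field_simps)
    finally have "cmod (c * (g y - z0) + D\<Phi> (0, y - x0)) \<le> cmod c * (e * n)" .
    moreover have "g y - g x0 - - D\<Phi> (0, y - x0) / c = (c * (g y - z0) + D\<Phi> (0, y - x0)) / c"
      using g0 c by (simp add: field_simps)
    ultimately show "cmod (g y - g x0 - - D\<Phi> (0, y - x0) / c) \<le> e * norm (y - x0)"
      using c by (simp add: n_def norm_divide pos_divide_le_eq mult.commute)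
  qed
qed

lemma holomorphic_implicit_function:
  fixes \<Phi> :: "complex \<Rightarrow> 'a::real_normed_vector \<Rightarrow> complex"
  assumes der: "((\<lambda>y. \<Phi> (fst y) (snd y)) has_derivative D\<Phi>) (at (z0, x0))"
    and c: "c \<noteq> 0" and D\<Phi>_fst: "\<And>a. D\<Phi> (a, 0) = a * c"
    and zero: "\<Phi> z0 x0 = 0"
    and hol: "\<forall>\<^sub>F y in nhds (z0, x0). (\<lambda>z. \<Phi> z (snd y)) field_differentiable at (fst y)"
  obtains g where "g x0 = z0" "\<forall>\<^sub>F x in nhds x0. \<Phi> (g x) x = 0"
    "(g has_derivative (\<lambda>v. - D\<Phi> (0, v) / c)) (at x0)"
proof -
  obtain g K where K: "K \<ge> 0" and g0: "g x0 = z0"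
    and sol: "\<forall>\<^sub>F x in nhds x0. \<Phi> (g x) x = 0 \<and> cmod (g x - z0) \<le> K * norm (x - x0)"
    using holomorphic_implicit_function_lipschitz[OF der c D\<Phi>_fst zero hol] by blast
  have "\<forall>\<^sub>F x in nhds x0. \<Phi> (g x) x = 0"
    using sol by (rule eventually_mono) simp
  with g0 show ?thesis
    using that implicit_function_has_derivative[OF der c D\<Phi>_fst g0 K sol] by blast
qed

section \<open>Derivatives of implicit representations\<close>

definition local_chart :: "real \<Rightarrow> (complex \<times> complex) set \<Rightarrow> complex \<times> complex \<Rightarrow> bool" where
  "local_chart \<rho> Y p \<longleftrightarrow> (\<exists>x0 pf Dp. x0 \<in> Ye \<rho> \<and> (pf has_derivative Dp) (at x0) \<and> Dp (1,0) \<noteq> 0 \<and>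
     (pf x0, snd x0) = p \<and> (\<forall>\<^sub>F x in nhds x0. x \<in> Ye \<rho> \<longrightarrow> (pf x, snd x) \<in> Y))"

lemma local_chartI:
  assumes "x0 \<in> Ye \<rho>" "(pf has_derivative Dp) (at x0)" "Dp (1,0) \<noteq> 0" "(pf x0, snd x0) = p"
    "\<forall>\<^sub>F x in nhds x0. x \<in> Ye \<rho> \<longrightarrow> (pf x, snd x) \<in> Y"
  shows "local_chart \<rho> Y p"
  unfolding local_chart_def using assms by blast

lemma local_chartE:
  assumes "local_chart \<rho> Y p"
  obtains x0 pf Dp where "x0 \<in> Ye \<rho>" "(pf has_derivative Dp) (at x0)" "Dp (1,0) \<noteq> 0"
    "(pf x0, snd x0) = p" "\<forall>\<^sub>F x in nhds x0. x \<in> Ye \<rho> \<longrightarrow> (pf x, snd x) \<in> Y"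
  using assms unfolding local_chart_def by blast

lemma local_chart_Int_Ye:
  assumes chart: "local_chart \<rho> Y p" and int: "fst p \<in> interior (Itil \<rho>)"
  shows "local_chart \<rho> (Y \<inter> Ye \<rho>) p"
proof -
  obtain x0 pf Dp where x0: "x0 \<in> Ye \<rho>" and dpf: "(pf has_derivative Dp) (at x0)"
    and p1: "Dp (1,0) \<noteq> 0" and p: "(pf x0, snd x0) = p"
    and inY: "\<forall>\<^sub>F x in nhds x0. x \<in> Ye \<rho> \<longrightarrow> (pf x, snd x) \<in> Y"
    using chart by (rule local_chartE)
  have "\<forall>\<^sub>F x in nhds x0. pf x \<in> interior (Itil \<rho>)"
    using has_derivative_eventually_in_open[OF dpf open_interior] int p by auto
  with inY have "\<forall>\<^sub>F x in nhds x0. x \<in> Ye \<rho> \<longrightarrow> (pf x, snd x) \<in> Y \<inter> Ye \<rho>"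
    by eventually_elim (auto simp: Ye_def mem_Times_iff dest: interior_subset[THEN subsetD])
  then show ?thesis using x0 dpf p1 p by (rule local_chartI[rotated 4])
qed

lemma implicit_rep_eqs:
  assumes "implicit_rep \<rho> Y H Zt Wt" "(a, b) \<in> Y"
  shows "a = Zt (fst (H (a, b)), b)" and "snd (H (a, b)) = Wt (fst (H (a, b)), b)"
proof -
  have "(fst (H (a, b)), snd (H (a, b))) \<in> H ` Y" using assms(2) by simp
  then have "H (a, b) = (fst (H (a, b)), snd (H (a, b))) \<longleftrightarrow>
      a = Zt (fst (H (a, b)), b) \<and> snd (H (a, b)) = Wt (fst (H (a, b)), b)"
    using assms unfolding implicit_rep_def by blast
  then show "a = Zt (fst (H (a, b)), b)" "snd (H (a, b)) = Wt (fst (H (a, b)), b)"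
    by simp_all
qed

text \<open>Differentiating the defining identities of an implicit representation along a chart
  x \<mapsto> (pf x, snd x), with Dp the derivative of pf, gives the hypotheses Z_eq and W_eq.\<close>
lemma implicit_derivative_values:
  fixes Dp :: "complex \<times> complex \<Rightarrow> complex"
  assumes DH: "linear DH" "cmul_linear DH" and P: "fst (DH (1,0)) \<noteq> 0"
    and DZ: "linear DZ" "\<forall>c u. DZ (cmul c u) = c * DZ u"
    and DW: "linear DW" "\<forall>c u. DW (cmul c u) = c * DW u"
    and p1: "Dp (1,0) \<noteq> 0"
    and Z_eq: "(\<lambda>v. DZ (fst (DH (Dp v, snd v)), snd v)) = Dp"
    and W_eq: "(\<lambda>v. DW (fst (DH (Dp v, snd v)), snd v)) = (\<lambda>v. snd (DH (Dp v, snd v)))"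
  shows "DZ (1,0) = 1 / fst (DH (1,0))" and "DW (0,1) = det2 DH / fst (DH (1,0))"
proof -
  define P Q R S where "P = fst (DH (1,0))" and "Q = fst (DH (0,1))"
    and "R = snd (DH (1,0))" and "S = snd (DH (0,1))"
  have DH_apply: "DH (a, b) = (a * P + b * Q, a * R + b * S)" for a b
    unfolding P_def Q_def R_def S_def using DH by (rule cmul_linear_apply)
  have DZ_apply: "DZ (a, b) = a * DZ (1,0) + b * DZ (0,1)" for a b
    using DZ by (rule linear_cmul_scalar_apply)
  have DW_apply: "DW (a, b) = a * DW (1,0) + b * DW (0,1)" for a b
    using DW by (rule linear_cmul_scalar_apply)
  define p1 p2 where "p1 = Dp (1,0)" and "p2 = Dp (0,1)"
  have "p1 * P * DZ (1,0) = p1"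
    using fun_cong[OF Z_eq, of "(1,0)"] DZ_apply[of "p1 * P" 0] by (simp add: DH_apply p1_def)
  then show "DZ (1,0) = 1 / fst (DH (1,0))"
    using p1 P by (simp add: p1_def P_def field_simps)
  have "p1 * P * DW (1,0) = p1 * R"
    using fun_cong[OF W_eq, of "(1,0)"] DW_apply[of "p1 * P" 0] by (auto simp: DH_apply p1_def)
  then have DW1: "DW (1,0) = R / P"
    using p1 P by (simp add: p1_def P_def field_simps)
  have "(p2 * P + Q) * DW (1,0) + DW (0,1) = p2 * R + S"
    using fun_cong[OF W_eq, of "(0,1)"] DW_apply[of "p2 * P + Q" 1] by (simp add: DH_apply p2_def)
  then show "DW (0,1) = det2 DH / fst (DH (1,0))"
    using P DW1 by (simp add: det2_def P_def Q_def R_def S_def field_simps)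
qed

lemma implicit_rep_derivative_identities:
  assumes rho: "\<rho> > 0" and rep: "implicit_rep \<rho> Y H Zt Wt"
    and x0: "x0 \<in> Ye \<rho>" and dpf: "(pf has_derivative Dp) (at x0)"
    and inY: "\<forall>\<^sub>F x in nhds x0. x \<in> Ye \<rho> \<longrightarrow> (pf x, snd x) \<in> Y"
    and dH: "(H has_derivative DH) (at (pf x0, snd x0))"
    and DZ: "(Zt has_derivative DZ) (at (fst (H (pf x0, snd x0)), snd x0))"
    and DW: "(Wt has_derivative DW) (at (fst (H (pf x0, snd x0)), snd x0))"
  shows "(\<lambda>v. DZ (fst (DH (Dp v, snd v)), snd v)) = Dp"
    and "(\<lambda>v. DW (fst (DH (Dp v, snd v)), snd v)) = (\<lambda>v. snd (DH (Dp v, snd v)))"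
proof -
  define \<phi> where "\<phi> x = (pf x, snd x)" for x
  define \<psi> where "\<psi> x = (fst (H (\<phi> x)), snd x)" for x
  have d\<phi>: "(\<phi> has_derivative (\<lambda>v. (Dp v, snd v))) (at x0)"
    unfolding \<phi>_def by (intro has_derivative_Pair dpf has_derivative_snd has_derivative_ident)
  have dH\<phi>: "((\<lambda>x. H (\<phi> x)) has_derivative (\<lambda>v. DH (Dp v, snd v))) (at x0)"
    using has_derivative_compose[OF d\<phi>] dH by (simp add: \<phi>_def)
  have d\<psi>: "(\<psi> has_derivative (\<lambda>v. (fst (DH (Dp v, snd v)), snd v))) (at x0)"
    unfolding \<psi>_def
    by (intro has_derivative_Pair has_derivative_fst[OF dH\<phi>] has_derivative_snd has_derivative_ident)
  have implicit_eqs: "\<forall>\<^sub>F x in nhds x0. x \<in> Ye \<rho> \<longrightarrow> pf x = Zt (\<psi> x) \<and> snd (H (\<phi> x)) = Wt (\<psi> x)"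
    using inY
  proof (rule eventually_mono, intro impI)
    fix x assume "x \<in> Ye \<rho> \<longrightarrow> (pf x, snd x) \<in> Y" "x \<in> Ye \<rho>"
    then show "pf x = Zt (\<psi> x) \<and> snd (H (\<phi> x)) = Wt (\<psi> x)"
      using implicit_rep_eqs[OF rep] unfolding \<phi>_def \<psi>_def by blast
  qed
  show "(\<lambda>v. DZ (fst (DH (Dp v, snd v)), snd v)) = Dp"
  proof (rule has_derivative_unique_on_Ye[OF rho x0 _ _ dpf])
    show "\<forall>\<^sub>F x in nhds x0. x \<in> Ye \<rho> \<longrightarrow> Zt (\<psi> x) = pf x"
      using implicit_eqs by (rule eventually_mono) auto
    show "((\<lambda>x. Zt (\<psi> x)) has_derivative (\<lambda>v. DZ (fst (DH (Dp v, snd v)), snd v))) (at x0)"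
      using has_derivative_compose[OF d\<psi>] DZ by (simp add: \<psi>_def \<phi>_def)
  qed
  show "(\<lambda>v. DW (fst (DH (Dp v, snd v)), snd v)) = (\<lambda>v. snd (DH (Dp v, snd v)))"
  proof (rule has_derivative_unique_on_Ye[OF rho x0 _ _ has_derivative_snd[OF dH\<phi>]])
    show "\<forall>\<^sub>F x in nhds x0. x \<in> Ye \<rho> \<longrightarrow> Wt (\<psi> x) = snd (H (\<phi> x))"
      using implicit_eqs by (rule eventually_mono) auto
    show "((\<lambda>x. Wt (\<psi> x)) has_derivative (\<lambda>v. DW (fst (DH (Dp v, snd v)), snd v))) (at x0)"
      using has_derivative_compose[OF d\<psi>] DW by (simp add: \<psi>_def \<phi>_def)
  qed
qed

lemma implicit_rep_deriv:
  assumes rho: "\<rho> > 0" and rep: "implicit_rep \<rho> Y H Zt Wt" and chart: "local_chart \<rho> Y p"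
    and Hp: "H p \<in> Ye \<rho>" and dH: "(H has_derivative DH) (at p)" "cmul_linear DH"
    and P: "fst (DH (1,0)) \<noteq> 0"
  shows "deriv (\<lambda>z. Zt (z, snd p)) (fst (H p)) = 1 / fst (DH (1,0))"
    and "deriv (\<lambda>w. Wt (fst (H p), w)) (snd p) = det2 DH / fst (DH (1,0))"
proof -
  obtain x0 pf Dp where x0: "x0 \<in> Ye \<rho>" and dpf: "(pf has_derivative Dp) (at x0)"
    and p1: "Dp (1,0) \<noteq> 0" and p: "(pf x0, snd x0) = p"
    and inY: "\<forall>\<^sub>F x in nhds x0. x \<in> Ye \<rho> \<longrightarrow> (pf x, snd x) \<in> Y"
    using chart by (rule local_chartE)
  have q: "(fst (H p), snd p) \<in> Ye \<rho>"
    using Hp x0 p by (auto simp: Ye_def mem_Times_iff)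
  have holo: "holo2_on Zt (Ye \<rho>)" "holo2_on Wt (Ye \<rho>)"
    using rep unfolding implicit_rep_def by blast+
  obtain DZ where DZ: "(Zt has_derivative DZ) (at (fst (H p), snd p))" "\<forall>c u. DZ (cmul c u) = c * DZ u"
    using holo(1) q by (rule holo2_on_has_derivative)
  obtain DW where DW: "(Wt has_derivative DW) (at (fst (H p), snd p))" "\<forall>c u. DW (cmul c u) = c * DW u"
    using holo(2) q by (rule holo2_on_has_derivative)
  have Z_eq: "(\<lambda>v. DZ (fst (DH (Dp v, snd v)), snd v)) = Dp"
    and W_eq: "(\<lambda>v. DW (fst (DH (Dp v, snd v)), snd v)) = (\<lambda>v. snd (DH (Dp v, snd v)))"
    using implicit_rep_derivative_identities[OF rho rep x0 dpf inY] dH(1) DZ(1) DW(1) p by auto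
  have "DZ (1,0) = 1 / fst (DH (1,0))" "DW (0,1) = det2 DH / fst (DH (1,0))"
    using implicit_derivative_values[where Dp = Dp, OF has_derivative_linear[OF dH(1)] dH(2) P
        has_derivative_linear[OF DZ(1)] DZ(2) has_derivative_linear[OF DW(1)] DW(2) p1 Z_eq W_eq]
    by simp_all
  then show "deriv (\<lambda>z. Zt (z, snd p)) (fst (H p)) = 1 / fst (DH (1,0))"
    and "deriv (\<lambda>w. Wt (fst (H p), w)) (snd p) = det2 DH / fst (DH (1,0))"
    using DERIV_imp_deriv[OF has_field_derivative_fst_slice[OF DZ]]
      DERIV_imp_deriv[OF has_field_derivative_snd_slice[OF DW]] by simp_all
qed

section \<open>Hyperbolic transformations\<close>

lemma theta_pos: "theta > 0"
  by (simp add: theta_def)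

text \<open>Z describes a C-omega-rho-box zeta Z ` Ye; only these two properties of it are needed.\<close>
definition box_chart :: "real \<Rightarrow> (complex \<times> complex \<Rightarrow> complex) \<Rightarrow> bool" where
  "box_chart \<rho> Z \<longleftrightarrow> holo2_on Z (Ye \<rho>) \<and>
     (\<forall>q\<in>Ye \<rho>. \<forall>D. (Z has_derivative D) (at q) \<longrightarrow> D (1,0) \<noteq> 0 \<and> cmod (D (0,1)) \<le> theta)"

text \<open>What the cone condition (2) and invertibility give for the matrix of the derivative.\<close>
definition theta_dominant :: "(complex \<times> complex \<Rightarrow> complex \<times> complex) \<Rightarrow> bool" where
  "theta_dominant D \<longleftrightarrow> fst (D (1,0)) \<noteq> 0 \<and>
     cmod (snd (D (1,0))) \<le> theta * cmod (fst (D (1,0))) \<and>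
     cmod (fst (D (0,1))) \<le> theta * cmod (fst (D (1,0))) \<and> det2 D \<noteq> 0"

lemma box_chart_has_derivative:
  assumes "box_chart \<rho> Z" "q \<in> Ye \<rho>"
  obtains D where "(Z has_derivative D) (at q)" "\<forall>c u. D (cmul c u) = c * D u"
    "D (1,0) \<noteq> 0" "cmod (D (0,1)) \<le> theta"
proof -
  have "holo2_on Z (Ye \<rho>)" using assms(1) unfolding box_chart_def by blast
  then obtain D where D: "(Z has_derivative D) (at q)" "\<forall>c u. D (cmul c u) = c * D u"
    using assms(2) by (rule holo2_on_has_derivative)
  moreover have "D (1,0) \<noteq> 0" "cmod (D (0,1)) \<le> theta"
    using assms D(1) unfolding box_chart_def by blast+
  ultimately show ?thesis by (rule that)
qed

lemma cmul_linear_zeta_derivative: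
  assumes "\<forall>c u. D (cmul c u) = c * D u"
  shows "cmul_linear (\<lambda>u. (D u, snd u))"
  unfolding cmul_linear_def
proof (intro allI)
  fix c u
  have "D (cmul c u) = c * D u" using assms by blast
  then show "(D (cmul c u), snd (cmul c u)) = cmul c (D u, snd u)"
    by (simp add: cmul_def)
qed

lemma det2_zeta_derivative: "det2 (\<lambda>u. (D u, snd u)) = D (1,0)"
  by (simp add: det2_def)

lemma box_local_chart:
  assumes "box_chart \<rho> Z" "p \<in> zeta Z ` Ye \<rho>"
  shows "local_chart \<rho> (zeta Z ` Ye \<rho>) p"
proof -
  obtain q where q: "q \<in> Ye \<rho>" "p = zeta Z q" using assms(2) by blast
  obtain D where "(Z has_derivative D) (at q)" "\<forall>c u. D (cmul c u) = c * D u"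
    "D (1,0) \<noteq> 0" "cmod (D (0,1)) \<le> theta"
    by (rule box_chart_has_derivative[OF assms(1) q(1)])
  moreover have "\<forall>\<^sub>F x in nhds q. x \<in> Ye \<rho> \<longrightarrow> (Z x, snd x) \<in> zeta Z ` Ye \<rho>"
    by (intro always_eventually) (auto simp: zeta_def)
  ultimately show ?thesis
    using q by (intro local_chartI[of q]) (auto simp: zeta_def)
qed

lemma box_chart_fst: "box_chart \<rho> fst"
proof -
  have dfst: "(fst has_derivative fst) (at q)" for q :: "complex \<times> complex"
    using has_derivative_fst[OF has_derivative_ident] .
  have "holo2_on fst (Ye \<rho>)"
    unfolding holo2_on_def
    by (intro exI[of _ UNIV]) (auto intro!: exI[of _ fst] dfst simp: cmul_def)
  moreover have "D (1,0) \<noteq> 0 \<and> cmod (D (0,1)) \<le> theta"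
    if "(fst has_derivative D) (at q)" for q :: "complex \<times> complex" and D
    using has_derivative_unique[OF that dfst] theta_pos by simp
  ultimately show ?thesis
    unfolding box_chart_def by blast
qed

lemma det2_nonzero_of_factor_on_Ye:
  assumes rho: "\<rho> > 0" and q: "q \<in> Ye \<rho>"
    and factor: "\<forall>\<^sub>F x in nhds q. x \<in> Ye \<rho> \<longrightarrow> G (H x) = K x"
    and H: "(H has_derivative DH) (at q)" "cmul_linear DH"
    and G: "(G has_derivative DG) (at (H q))" "cmul_linear DG"
    and K: "(K has_derivative DK) (at q)" "det2 DK \<noteq> 0"
  shows "det2 DH \<noteq> 0"
proof -
  have "(\<lambda>v. DG (DH v)) = DK"
    by (rule has_derivative_unique_on_Ye[OF rho q factor has_derivative_compose[OF H(1) G(1)] K(1)])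
  then have "det2 DG * det2 DH = det2 DK"
    using det2_comp[OF has_derivative_linear[OF H(1)] H(2) has_derivative_linear[OF G(1)] G(2)]
    by (simp add: comp_def)
  with K(2) show ?thesis by auto
qed

lemma omega_box_data_box_chart:
  assumes rho: "\<rho> > 0" and box: "omega_box_data \<rho> Z Y"
  shows "box_chart \<rho> Z"
proof -
  obtain G where hz: "holo_map_on (zeta Z) (Ye \<rho>)" and hG: "holo_map_on G (zeta Z ` Ye \<rho>)"
    and inv: "\<forall>p\<in>Ye \<rho>. G (zeta Z p) = p"
    using box unfolding omega_box_data_def biholo_on_def by blast
  have bnd: "cmod (deriv (\<lambda>w'. Z (z, w')) w) < theta" if "(z, w) \<in> Ye \<rho>" for z w
    using box that unfolding omega_box_data_def by blast
  have holo: "holo2_on Z (Ye \<rho>)"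
    using hz unfolding holo_map_on_def zeta_def by simp
  have "D (1,0) \<noteq> 0 \<and> cmod (D (0,1)) \<le> theta"
    if q: "q \<in> Ye \<rho>" and D: "(Z has_derivative D) (at q)" for q D
  proof -
    have Dc: "\<forall>c u. D (cmul c u) = c * D u"
      using holo q D by (rule holo2_on_derivative_cmul)
    obtain DG where DG: "(G has_derivative DG) (at (zeta Z q))" "cmul_linear DG"
      by (rule holo_map_on_has_derivative[OF hG imageI[OF q]])
    have "det2 (\<lambda>u. (D u, snd u)) \<noteq> 0"
    proof (rule det2_nonzero_of_factor_on_Ye[OF rho q _ zeta_has_derivative[OF D]
          cmul_linear_zeta_derivative[OF Dc] DG has_derivative_ident])
      show "\<forall>\<^sub>F x in nhds q. x \<in> Ye \<rho> \<longrightarrow> G (zeta Z x) = x"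
        using inv by (intro always_eventually) simp
    qed (simp add: det2_def)
    then have "D (1,0) \<noteq> 0" by (simp add: det2_zeta_derivative)
    moreover obtain z w where qzw: "q = (z, w)" by (cases q)
    have "deriv (\<lambda>w'. Z (z, w')) w = D (0,1)"
      using has_field_derivative_snd_slice[OF D[unfolded qzw] Dc] by (rule DERIV_imp_deriv)
    then have "cmod (D (0,1)) \<le> theta"
      using bnd[of z w] q qzw by simp
    ultimately show ?thesis by blast
  qed
  then show ?thesis
    unfolding box_chart_def using holo by blast
qed

lemma cone_condition_entries:
  assumes lin: "linear D" "cmul_linear D"
    and cone: "\<forall>u. u \<noteq> 0 \<and> u \<notin> chi_v \<longrightarrow> D u \<in> chi_h"
  shows "cmod (snd (D (1,0))) < theta * cmod (fst (D (1,0)))"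
    and "cmod (fst (D (0,1))) < theta * cmod (fst (D (1,0)))"
proof -
  define P Q R S where "P = fst (D (1,0))" and "Q = fst (D (0,1))"
    and "R = snd (D (1,0))" and "S = snd (D (0,1))"
  have D: "D (a, b) = (a * P + b * Q, a * R + b * S)" for a b
    unfolding P_def Q_def R_def S_def using lin by (rule cmul_linear_apply)
  have "(1, 0) \<notin> chi_v" by (simp add: chi_v_def)
  then have "D (1, 0) \<in> chi_h" using cone by (simp add: zero_prod_def)
  then show R: "cmod (snd (D (1,0))) < theta * cmod (fst (D (1,0)))" by (simp add: chi_h_def)
  show "cmod (fst (D (0,1))) < theta * cmod (fst (D (1,0)))"
  proof (rule ccontr)
    assume "\<not> cmod (fst (D (0,1))) < theta * cmod (fst (D (1,0)))"
    then have "(Q, - P) \<notin> chi_v" by (simp add: chi_v_def P_def Q_def)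
    moreover have "(Q, - P) \<noteq> 0" using R by (auto simp: zero_prod_def P_def)
    ultimately have "D (Q, - P) \<in> chi_h" using cone by blast
    then show False by (simp add: D chi_h_def algebra_simps)
  qed
qed

text \<open>Invertibility of the derivative comes from differentiating G (F (zeta Z x)) = zeta Z x
  on the closed box.\<close>
lemma cone_derivative_theta_dominant:
  assumes rho: "\<rho> > 0" and box: "box_chart \<rho> Z" and p: "p \<in> zeta Z ` Ye \<rho>"
    and hF: "holo_map_on F (zeta Z ` Ye \<rho>)" and hG: "holo_map_on G (F ` zeta Z ` Ye \<rho>)"
    and inv: "\<forall>p\<in>zeta Z ` Ye \<rho>. G (F p) = p"
    and dF: "(F has_derivative D) (at p)"
    and cone: "\<forall>u. u \<noteq> 0 \<and> u \<notin> chi_v \<longrightarrow> D u \<in> chi_h"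
  shows "theta_dominant D"
proof -
  have lin: "linear D"
    using dF by (rule has_derivative_linear)
  have Dc: "cmul_linear D"
    using hF p dF by (rule holo_map_on_derivative_cmul_linear)
  obtain q where q: "q \<in> Ye \<rho>" "p = zeta Z q" using p by blast
  obtain DZ where DZ: "(Z has_derivative DZ) (at q)" "\<forall>c u. DZ (cmul c u) = c * DZ u"
    "DZ (1,0) \<noteq> 0" "cmod (DZ (0,1)) \<le> theta"
    by (rule box_chart_has_derivative[OF box q(1)])
  define D\<zeta> where "D\<zeta> u = (DZ u, snd u)" for u
  have d\<zeta>: "(zeta Z has_derivative D\<zeta>) (at q)" "linear D\<zeta>" "cmul_linear D\<zeta>"
    unfolding D\<zeta>_def using zeta_has_derivative[OF DZ(1)] has_derivative_linear
      cmul_linear_zeta_derivative[OF DZ(2)] by blast+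
  obtain DG where DG: "(G has_derivative DG) (at (F p))" "cmul_linear DG"
    by (rule holo_map_on_has_derivative[OF hG imageI[OF p]])
  have "det2 (D \<circ> D\<zeta>) \<noteq> 0"
  proof (rule det2_nonzero_of_factor_on_Ye[where H = "\<lambda>x. F (zeta Z x)", OF rho q(1) _ _ _ _ _ d\<zeta>(1)])
    show "\<forall>\<^sub>F x in nhds q. x \<in> Ye \<rho> \<longrightarrow> G (F (zeta Z x)) = zeta Z x"
      using inv by (intro always_eventually) simp
    show "((\<lambda>x. F (zeta Z x)) has_derivative D \<circ> D\<zeta>) (at q)"
      using has_derivative_compose[OF d\<zeta>(1) dF[unfolded q(2)]] by (simp add: comp_def)
    show "cmul_linear (D \<circ> D\<zeta>)" using d\<zeta>(3) Dc by (rule cmul_linear_comp)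
    show "(G has_derivative DG) (at (F (zeta Z q)))" "cmul_linear DG" using DG q(2) by simp_all
    show "det2 D\<zeta> \<noteq> 0" using DZ(3) by (simp add: D\<zeta>_def det2_def)
  qed
  then have "det2 D \<noteq> 0"
    using det2_comp[OF d\<zeta>(2,3) lin Dc] by simp
  then show ?thesis
    using cone_condition_entries[OF lin Dc cone]
    unfolding theta_dominant_def by (auto simp: less_imp_le)
qed

lemma id_theta_dominant: "theta_dominant (\<lambda>u. u)"
  by (simp add: theta_dominant_def det2_def theta_pos less_imp_le)

text \<open>The part of hyp_tr that the argument needs; the boundary conditions (1) are kept apart,
  since the identity transformation violates them.\<close>
definition hyp_tr_data :: "real \<Rightarrow> (complex \<times> complex \<Rightarrow> complex) \<Rightarrow> (complex \<times> complex) set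
    \<Rightarrow> (complex \<times> complex \<Rightarrow> complex \<times> complex) \<Rightarrow> bool" where
  "hyp_tr_data \<rho> Z Y F \<longleftrightarrow> box_chart \<rho> Z \<and> Y = zeta Z ` Ye \<rho> \<and> F ` Y \<subseteq> Ye \<rho> \<and> holo_map_on F Y \<and>
     (\<forall>p\<in>Y. \<forall>D. (F has_derivative D) (at p) \<longrightarrow> theta_dominant D)"

definition boundary_conditions :: "real \<Rightarrow> (complex \<times> complex \<Rightarrow> complex) \<Rightarrow> (complex \<times> complex) set
    \<Rightarrow> (complex \<times> complex \<Rightarrow> complex \<times> complex) \<Rightarrow> bool" where
  "boundary_conditions \<rho> Z Y F \<longleftrightarrow> F ` zeta Z ` (frontier (Itil \<rho>) \<times> Itil \<rho>) \<subseteq> dsYe \<rho> \<and>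
     Y \<inter> dsYe \<rho> = {} \<and> F ` Y \<inter> duYe \<rho> = {}"

lemma hyp_tr_structure:
  assumes rho: "\<rho> > 0" and hyp: "hyp_tr \<rho> Y F"
  obtains Z where "hyp_tr_data \<rho> Z Y F" "Y = Ye \<rho> \<and> F = id \<or> boundary_conditions \<rho> Z Y F"
proof (cases "Y = Ye \<rho> \<and> F = id")
  case True
  have "zeta fst ` Ye \<rho> = Ye \<rho>" by (simp add: zeta_def)
  moreover have "theta_dominant D" if "(F has_derivative D) (at p)" for p D
    using has_derivative_unique[OF that[unfolded True[THEN conjunct2] id_def] has_derivative_ident]
      id_theta_dominant by simp
  ultimately have "hyp_tr_data \<rho> fst Y F"
    unfolding hyp_tr_data_def using box_chart_fst True holo_map_on_id[of "Ye \<rho>"] by (simp add: id_def)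
  with True show ?thesis by (intro that) auto
next
  case False
  with hyp obtain Z G where box: "omega_box_data \<rho> Z Y" and hF: "holo_map_on F Y"
    and hG: "holo_map_on G (F ` Y)" and inv: "\<forall>p\<in>Y. G (F p) = p" and sub: "F ` Y \<subseteq> Ye \<rho>"
    and bdry: "F ` zeta Z ` (frontier (Itil \<rho>) \<times> Itil \<rho>) \<subseteq> dsYe \<rho>" "Y \<inter> dsYe \<rho> = {}"
      "F ` Y \<inter> duYe \<rho> = {}"
    and cone: "\<forall>p\<in>Y. \<forall>D. (F has_derivative D) (at p) \<longrightarrow>
         (\<forall>u. u \<noteq> 0 \<and> u \<notin> chi_v \<longrightarrow> D u \<in> chi_h \<and> cmod (fst (D u)) > lam * cmod (fst u))"
    unfolding hyp_tr_def by (elim disjE exE conjE) simp_all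
  have chart: "box_chart \<rho> Z"
    by (rule omega_box_data_box_chart[OF rho box])
  have Y: "Y = zeta Z ` Ye \<rho>"
    using box by (simp add: omega_box_data_def)
  have dom: "theta_dominant D" if p: "p \<in> Y" and dF: "(F has_derivative D) (at p)" for p D
  proof (rule cone_derivative_theta_dominant[OF rho chart _ _ _ _ dF])
    show "p \<in> zeta Z ` Ye \<rho>" using p Y by simp
    show "holo_map_on F (zeta Z ` Ye \<rho>)" using hF Y by simp
    show "holo_map_on G (F ` zeta Z ` Ye \<rho>)" using hG Y by simp
    show "\<forall>p\<in>zeta Z ` Ye \<rho>. G (F p) = p" using inv Y by simp
    show "\<forall>u. u \<noteq> 0 \<and> u \<notin> chi_v \<longrightarrow> D u \<in> chi_h" using cone p dF by blast
  qed
  have "hyp_tr_data \<rho> Z Y F"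
    unfolding hyp_tr_data_def using chart Y sub hF dom by blast
  moreover have "boundary_conditions \<rho> Z Y F"
    unfolding boundary_conditions_def using bdry by blast
  ultimately show ?thesis by (intro that) auto
qed

lemma hyp_tr_derivative:
  assumes "\<rho> > 0" "hyp_tr \<rho> Y F" "p \<in> Y"
  obtains D where "(F has_derivative D) (at p)" "cmul_linear D" "theta_dominant D"
proof -
  obtain Z where "hyp_tr_data \<rho> Z Y F" "Y = Ye \<rho> \<and> F = id \<or> boundary_conditions \<rho> Z Y F"
    by (rule hyp_tr_structure[OF assms(1,2)])
  then have hF: "holo_map_on F Y" and dom: "\<forall>p\<in>Y. \<forall>D. (F has_derivative D) (at p) \<longrightarrow> theta_dominant D"
    unfolding hyp_tr_data_def by blast+
  obtain D where "(F has_derivative D) (at p)" "cmul_linear D"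
    by (rule holo_map_on_has_derivative[OF hF assms(3)])
  then show ?thesis using that dom assms(3) by blast
qed

lemma hyp_tr_local_chart:
  assumes "\<rho> > 0" "hyp_tr \<rho> Y F" "p \<in> Y"
  shows "local_chart \<rho> Y p"
proof -
  obtain Z where "hyp_tr_data \<rho> Z Y F" "Y = Ye \<rho> \<and> F = id \<or> boundary_conditions \<rho> Z Y F"
    by (rule hyp_tr_structure[OF assms(1,2)])
  then show ?thesis using box_local_chart assms(3) unfolding hyp_tr_data_def by simp
qed

lemma hyp_tr_image_subset:
  assumes "\<rho> > 0" "hyp_tr \<rho> Y F"
  shows "F ` Y \<subseteq> Ye \<rho>"
proof -
  obtain Z where "hyp_tr_data \<rho> Z Y F" "Y = Ye \<rho> \<and> F = id \<or> boundary_conditions \<rho> Z Y F"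
    by (rule hyp_tr_structure[OF assms])
  then show ?thesis unfolding hyp_tr_data_def by blast
qed

section \<open>Local charts of the star product\<close>

lemma crossing_slice_field_differentiable:
  assumes E: "(E has_derivative D1) (at (z, w))" "cmul_linear D1"
    and Z': "(Z' has_derivative D2) (at (\<xi>, snd (E (z, w))))" "\<forall>c u. D2 (cmul c u) = c * D2 u"
  shows "(\<lambda>z. fst (E (z, w)) - Z' (\<xi>, snd (E (z, w)))) field_differentiable at z"
proof -
  have dE: "((\<lambda>z. E (z, w)) has_derivative (\<lambda>h. D1 (h, 0))) (at z)"
    using has_derivative_compose[OF has_derivative_Pair[OF has_derivative_ident has_derivative_const] E(1)]
    by simp
  have "((\<lambda>z. (\<xi>, snd (E (z, w)))) has_derivative (\<lambda>h. (0, snd (D1 (h, 0))))) (at z)"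
    by (intro has_derivative_Pair has_derivative_const has_derivative_snd dE)
  from has_derivative_compose[OF this Z'(1)]
  have "((\<lambda>z. Z' (\<xi>, snd (E (z, w)))) has_derivative (\<lambda>h. D2 (0, snd (D1 (h, 0))))) (at z)" .
  then have "((\<lambda>z. fst (E (z, w)) - Z' (\<xi>, snd (E (z, w)))) has_derivative
      (\<lambda>h. fst (D1 (h, 0)) - D2 (0, snd (D1 (h, 0))))) (at z)"
    by (intro has_derivative_diff has_derivative_fst dE)
  moreover have "(\<lambda>h. fst (D1 (h, 0)) - D2 (0, snd (D1 (h, 0))))
      = (*) (fst (D1 (1,0)) - D2 (0,1) * snd (D1 (1,0)))"
  proof
    fix h
    show "fst (D1 (h, 0)) - D2 (0, snd (D1 (h, 0))) = (fst (D1 (1,0)) - D2 (0,1) * snd (D1 (1,0))) * h"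
      using cmul_linear_apply[OF has_derivative_linear[OF E(1)] E(2), of h 0]
        linear_cmul_scalar_apply[OF has_derivative_linear[OF Z'(1)] Z'(2), of 0 "h * snd (D1 (1,0))"]
      by (simp add: algebra_simps)
  qed
  ultimately show ?thesis
    unfolding field_differentiable_def has_field_derivative_def by auto
qed

lemma crossing_equation_has_derivative:
  fixes E :: "complex \<times> complex \<Rightarrow> complex \<times> complex" and Z' :: "complex \<times> complex \<Rightarrow> complex"
  assumes DE: "(E has_derivative DE) (at (\<zeta>0, w0))"
    and DZ': "(Z' has_derivative DZ') (at (\<xi>1, snd (E (\<zeta>0, w0))))"
  shows "((\<lambda>y. fst (E (fst y, snd (snd y))) - Z' (fst (snd y), snd (E (fst y, snd (snd y)))))
      has_derivative (\<lambda>v. fst (DE (fst v, snd (snd v))) - DZ' (fst (snd v), snd (DE (fst v, snd (snd v))))))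
      (at (\<zeta>0, \<xi>1, w0))"
proof -
  have da: "((\<lambda>y. (fst y, snd (snd y))) has_derivative (\<lambda>v. (fst v, snd (snd v)))) (at y)"
    for y :: "complex \<times> complex \<times> complex"
    by (intro has_derivative_Pair has_derivative_fst has_derivative_snd has_derivative_ident)
  have dEa: "((\<lambda>y. E (fst y, snd (snd y))) has_derivative (\<lambda>v. DE (fst v, snd (snd v)))) (at (\<zeta>0, \<xi>1, w0))"
    using has_derivative_compose[OF da[of "(\<zeta>0, \<xi>1, w0)"], of E DE] DE by simp
  have "((\<lambda>y. (fst (snd y), snd (E (fst y, snd (snd y))))) has_derivative
      (\<lambda>v. (fst (snd v), snd (DE (fst v, snd (snd v)))))) (at (\<zeta>0, \<xi>1, w0))"
    by (intro has_derivative_Pair has_derivative_fst has_derivative_snd has_derivative_ident dEa)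
  from has_derivative_compose[OF this] DZ'
  have "((\<lambda>y. Z' (fst (snd y), snd (E (fst y, snd (snd y))))) has_derivative
      (\<lambda>v. DZ' (fst (snd v), snd (DE (fst v, snd (snd v)))))) (at (\<zeta>0, \<xi>1, w0))"
    by simp
  with dEa show ?thesis by (intro has_derivative_diff has_derivative_fst)
qed

lemma crossing_equation_eventually_holomorphic:
  assumes E: "holo_map_on E {(\<zeta>0, w0)}" and Z': "holo2_on Z' {(\<xi>1, snd (E (\<zeta>0, w0)))}"
  shows "\<forall>\<^sub>F y in nhds (\<zeta>0, \<xi>1, w0).
    (\<lambda>z. fst (E (z, snd (snd y))) - Z' (fst (snd y), snd (E (z, snd (snd y))))) field_differentiable at (fst y)"
proof -
  obtain UE where UE: "open UE" "(\<zeta>0, w0) \<in> UE"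
    "\<forall>q\<in>UE. \<exists>D. (E has_derivative D) (at q) \<and> cmul_linear D"
    using E unfolding holo_map_on_iff by blast
  obtain UZ where UZ: "open UZ" "(\<xi>1, snd (E (\<zeta>0, w0))) \<in> UZ"
    "\<forall>q\<in>UZ. \<exists>D. (Z' has_derivative D) (at q) \<and> (\<forall>c u. D (cmul c u) = c * D u)"
    using Z' by (rule holo2_onE) blast
  obtain DE where DE: "(E has_derivative DE) (at (\<zeta>0, w0))"
    using UE by blast
  have da: "((\<lambda>y. (fst y, snd (snd y))) has_derivative (\<lambda>v. (fst v, snd (snd v)))) (at y)"
    for y :: "complex \<times> complex \<times> complex"
    by (intro has_derivative_Pair has_derivative_fst has_derivative_snd has_derivative_ident)
  have "((\<lambda>y. E (fst y, snd (snd y))) has_derivative (\<lambda>v. DE (fst v, snd (snd v)))) (at (\<zeta>0, \<xi>1, w0))"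
    using has_derivative_compose[OF da[of "(\<zeta>0, \<xi>1, w0)"], of E DE] DE by simp
  then have db: "((\<lambda>y. (fst (snd y), snd (E (fst y, snd (snd y))))) has_derivative
      (\<lambda>v. (fst (snd v), snd (DE (fst v, snd (snd v)))))) (at (\<zeta>0, \<xi>1, w0))"
    by (intro has_derivative_Pair has_derivative_fst has_derivative_snd has_derivative_ident)
  have "\<forall>\<^sub>F y in nhds (\<zeta>0, \<xi>1, w0). (fst y, snd (snd y)) \<in> UE"
    using has_derivative_eventually_in_open[OF da UE(1)] UE(2) by simp
  moreover have "\<forall>\<^sub>F y in nhds (\<zeta>0, \<xi>1, w0). (fst (snd y), snd (E (fst y, snd (snd y)))) \<in> UZ"
    using has_derivative_eventually_in_open[OF db UZ(1)] UZ(2) by simp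
  ultimately show ?thesis
  proof eventually_elim
    case (elim y)
    obtain D1 where "(E has_derivative D1) (at (fst y, snd (snd y)))" "cmul_linear D1"
      using UE(3) elim(1) by blast
    moreover obtain D2 where "(Z' has_derivative D2) (at (fst (snd y), snd (E (fst y, snd (snd y)))))"
      "\<forall>c u. D2 (cmul c u) = c * D2 u"
      using UZ(3) elim(2) by blast
    ultimately show ?case by (rule crossing_slice_field_differentiable)
  qed
qed

text \<open>The crossing equation says that E (z, w) lies on the vertical curve of the second box
  through Z' (\<xi>, .); it is solved for z by the implicit function theorem.\<close>
lemma holo_crossing_solution:
  assumes E: "holo_map_on E {(\<zeta>0, w0)}" and Z': "holo2_on Z' {(\<xi>1, snd (E (\<zeta>0, w0)))}"
    and cross: "fst (E (\<zeta>0, w0)) = Z' (\<xi>1, snd (E (\<zeta>0, w0)))"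
    and DE: "(E has_derivative DE) (at (\<zeta>0, w0))"
    and DZ': "(Z' has_derivative DZ') (at (\<xi>1, snd (E (\<zeta>0, w0))))"
    and transversal: "fst (DE (1,0)) \<noteq> DZ' (0,1) * snd (DE (1,0))"
    and DZ'_fst: "DZ' (1,0) \<noteq> 0"
  obtains g Dg where "g (\<xi>1, w0) = \<zeta>0" "(g has_derivative Dg) (at (\<xi>1, w0))" "Dg (1,0) \<noteq> 0"
    "\<forall>\<^sub>F x in nhds (\<xi>1, w0). fst (E (g x, snd x)) = Z' (fst x, snd (E (g x, snd x)))"
proof -
  define \<Phi> where "\<Phi> z x = fst (E (z, snd x)) - Z' (fst x, snd (E (z, snd x)))" for z x
  define D\<Phi> where "D\<Phi> v = fst (DE (fst v, snd (snd v))) - DZ' (fst (snd v), snd (DE (fst v, snd (snd v))))"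
    for v :: "complex \<times> complex \<times> complex"
  define c where "c = fst (DE (1,0)) - DZ' (0,1) * snd (DE (1,0))"
  have der: "((\<lambda>y. \<Phi> (fst y) (snd y)) has_derivative D\<Phi>) (at (\<zeta>0, \<xi>1, w0))"
    unfolding \<Phi>_def D\<Phi>_def using DE DZ' by (rule crossing_equation_has_derivative)
  have DE_lin: "linear DE" "cmul_linear DE"
    using has_derivative_linear[OF DE] holo_map_on_derivative_cmul_linear[OF E _ DE] by simp_all
  have DZ'_lin: "linear DZ'" "\<forall>c u. DZ' (cmul c u) = c * DZ' u"
    using has_derivative_linear[OF DZ'] holo2_on_derivative_cmul[OF Z' _ DZ'] by simp_all
  have D\<Phi>_fst: "D\<Phi> (z, 0) = z * c" for z
    using cmul_linear_apply[OF DE_lin, of z 0]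
      linear_cmul_scalar_apply[OF DZ'_lin, of 0 "z * snd (DE (1,0))"]
    by (simp add: D\<Phi>_def c_def algebra_simps)
  have c: "c \<noteq> 0" using transversal by (simp add: c_def)
  have zero: "\<Phi> \<zeta>0 (\<xi>1, w0) = 0" using cross by (simp add: \<Phi>_def)
  have hol: "\<forall>\<^sub>F y in nhds (\<zeta>0, \<xi>1, w0). (\<lambda>z. \<Phi> z (snd y)) field_differentiable at (fst y)"
    unfolding \<Phi>_def using E Z' by (rule crossing_equation_eventually_holomorphic)
  obtain g where g0: "g (\<xi>1, w0) = \<zeta>0" and sol: "\<forall>\<^sub>F x in nhds (\<xi>1, w0). \<Phi> (g x) x = 0"
    and dg: "(g has_derivative (\<lambda>v. - D\<Phi> (0, v) / c)) (at (\<xi>1, w0))"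
    using holomorphic_implicit_function[OF der c D\<Phi>_fst zero hol] by blast
  have "DE (0, 0) = 0"
    using linear_0[OF DE_lin(1)] by (simp add: zero_prod_def)
  then have "- D\<Phi> (0, (1,0)) / c \<noteq> 0"
    using DZ'_fst c by (simp add: D\<Phi>_def)
  moreover have "\<forall>\<^sub>F x in nhds (\<xi>1, w0). fst (E (g x, snd x)) = Z' (fst x, snd (E (g x, snd x)))"
    using sol by (rule eventually_mono) (simp add: \<Phi>_def)
  ultimately show ?thesis
    using that g0 dg by blast
qed

lemma theta_dominant_transversal:
  assumes "linear D" "cmul_linear D" "theta_dominant D" "cmod a \<le> theta" "b \<noteq> 0"
  shows "fst (D (b, 0)) \<noteq> a * snd (D (b, 0))"
proof -
  define P R where "P = fst (D (1,0))" and "R = snd (D (1,0))"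
  have PR: "P \<noteq> 0" "cmod R \<le> theta * cmod P"
    using assms(3) by (simp_all add: theta_dominant_def P_def R_def)
  have "cmod (a * R) \<le> theta * (theta * cmod P)"
    unfolding norm_mult using assms(4) PR(2) theta_pos by (intro mult_mono) auto
  also have "\<dots> < cmod P" using PR(1) by (simp add: theta_def)
  finally have "P \<noteq> a * R" by auto
  then show ?thesis
    using cmul_linear_apply[OF assms(1,2), of b 0] assms(5) by (auto simp: P_def R_def mult.left_commute)
qed

lemma crossing_point_interior:
  assumes sub: "F ` zeta Z ` Ye \<rho> \<subseteq> Ye \<rho>"
    and stable: "F ` zeta Z ` (frontier (Itil \<rho>) \<times> Itil \<rho>) \<subseteq> dsYe \<rho>"
    and unstable: "F ` zeta Z ` Ye \<rho> \<inter> duYe \<rho> = {}" and Y'_stable: "Y' \<inter> dsYe \<rho> = {}"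
    and \<zeta>0: "(\<zeta>0, w0) \<in> Ye \<rho>" and Fp: "F (zeta Z (\<zeta>0, w0)) = (z1, w1)" and q: "(z1, w1) \<in> Y'"
  shows "\<zeta>0 \<in> interior (Itil \<rho>)" and "w1 \<in> interior (Itil \<rho>)"
proof -
  have image: "(z1, w1) \<in> F ` zeta Z ` Ye \<rho>"
    unfolding Fp[symmetric] using \<zeta>0 by (intro imageI)
  show "\<zeta>0 \<in> interior (Itil \<rho>)"
  proof (rule Itil_interiorI)
    show "\<zeta>0 \<in> Itil \<rho>" using \<zeta>0 by (simp add: Ye_def)
    show "\<zeta>0 \<notin> frontier (Itil \<rho>)"
    proof
      assume "\<zeta>0 \<in> frontier (Itil \<rho>)"
      then have "F (zeta Z (\<zeta>0, w0)) \<in> dsYe \<rho>"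
        using stable \<zeta>0 by (auto simp: Ye_def)
      then show False using Y'_stable q Fp by auto
    qed
  qed
  have "(z1, w1) \<in> Ye \<rho>" using sub image by blast
  then show "w1 \<in> interior (Itil \<rho>)"
    using unstable image by (intro Itil_interiorI) (auto simp: duYe_def Ye_def)
qed

lemma star_dom_local_chart_of_crossing:
  assumes Y: "Y = zeta Z ` Ye \<rho>" and Y': "Y' = zeta Z' ` Ye \<rho>"
    and DZ: "(Z has_derivative DZ) (at (\<zeta>0, w0))" "\<forall>c u. DZ (cmul c u) = c * DZ u" "DZ (1,0) \<noteq> 0"
    and DE: "((\<lambda>x. F (zeta Z x)) has_derivative DE) (at (\<zeta>0, w0))"
    and \<zeta>0: "\<zeta>0 \<in> interior (Itil \<rho>)" and w1: "snd (F (zeta Z (\<zeta>0, w0))) \<in> interior (Itil \<rho>)"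
    and x0: "(\<xi>1, w0) \<in> Ye \<rho>"
    and g: "g (\<xi>1, w0) = \<zeta>0" "(g has_derivative Dg) (at (\<xi>1, w0))" "Dg (1,0) \<noteq> 0"
    and crossing: "\<forall>\<^sub>F x in nhds (\<xi>1, w0).
      fst (F (zeta Z (g x, snd x))) = Z' (fst x, snd (F (zeta Z (g x, snd x))))"
  shows "local_chart \<rho> (star_dom Y F Y') (Z (\<zeta>0, w0), w0)"
proof -
  have gs0: "(g (\<xi>1, w0), snd (\<xi>1, w0)) = (\<zeta>0, w0)" using g(1) by simp
  have dgs: "((\<lambda>x. (g x, snd x)) has_derivative (\<lambda>v. (Dg v, snd v))) (at (\<xi>1, w0))"
    by (intro has_derivative_Pair g(2) has_derivative_snd has_derivative_ident)
  have "\<forall>\<^sub>F x in nhds (\<xi>1, w0). g x \<in> interior (Itil \<rho>)"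
    using has_derivative_eventually_in_open[OF g(2) open_interior] g(1) \<zeta>0 by simp
  moreover have "\<forall>\<^sub>F x in nhds (\<xi>1, w0). snd (F (zeta Z (g x, snd x))) \<in> interior (Itil \<rho>)"
    using has_derivative_eventually_in_open[OF has_derivative_snd[OF has_derivative_compose[OF dgs DE[folded gs0]]]
        open_interior] w1 gs0 by simp
  moreover note crossing
  ultimately have "\<forall>\<^sub>F x in nhds (\<xi>1, w0). x \<in> Ye \<rho> \<longrightarrow> (Z (g x, snd x), snd x) \<in> star_dom Y F Y'"
  proof eventually_elim
    case (elim x)
    show ?case
    proof
      assume "x \<in> Ye \<rho>"
      then have gx: "(g x, snd x) \<in> Ye \<rho>" and sx: "(fst x, snd (F (zeta Z (g x, snd x)))) \<in> Ye \<rho>"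
        using elim(1,2) interior_subset by (auto simp: Ye_def mem_Times_iff)
      have "F (zeta Z (g x, snd x)) = zeta Z' (fst x, snd (F (zeta Z (g x, snd x))))"
        using elim(3) by (simp add: zeta_def prod_eq_iff)
      then have "F (zeta Z (g x, snd x)) \<in> Y'"
        unfolding Y' using sx by (rule image_eqI)
      moreover have "zeta Z (g x, snd x) \<in> Y"
        unfolding Y using gx by (rule imageI)
      ultimately show "(Z (g x, snd x), snd x) \<in> star_dom Y F Y'"
        by (simp add: star_dom_def zeta_def)
    qed
  qed
  moreover have "((\<lambda>x. Z (g x, snd x)) has_derivative (\<lambda>v. DZ (Dg v, snd v))) (at (\<xi>1, w0))"
    using has_derivative_compose[OF dgs DZ(1)[folded gs0]] .
  moreover have "DZ (Dg (1,0), snd (1::complex, 0::complex)) \<noteq> 0"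
    using linear_cmul_scalar_apply[OF has_derivative_linear[OF DZ(1)] DZ(2), of "Dg (1,0)" 0] g(3) DZ(3)
    by simp
  ultimately show ?thesis
    using x0 g(1)
    by (intro local_chartI[where pf = "\<lambda>x. Z (g x, snd x)" and Dp = "\<lambda>v. DZ (Dg v, snd v)"]) auto
qed

text \<open>Near (z0, w0) the star domain is parametrised by (\<xi>, w) \<in> Ye, where \<xi> is the
  Z'-coordinate of the image point: one solves F (zeta Z (z, w)) \<in> zeta Z' ({\<xi>} \<times> Itil) for z.\<close>
lemma star_dom_local_chart_crossing:
  assumes rho: "\<rho> > 0" and data: "hyp_tr_data \<rho> Z Y F" and bdry: "boundary_conditions \<rho> Z Y F"
    and Z': "box_chart \<rho> Z'" and Y': "Y' = zeta Z' ` Ye \<rho>" and Y'_stable: "Y' \<inter> dsYe \<rho> = {}"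
    and p: "(z0, w0) \<in> Y" and Fp: "F (z0, w0) = (z1, w1)" and q: "(z1, w1) \<in> Y'"
  shows "local_chart \<rho> (star_dom Y F Y') (z0, w0)"
proof -
  have Z: "box_chart \<rho> Z" and Y: "Y = zeta Z ` Ye \<rho>" and sub: "F ` Y \<subseteq> Ye \<rho>"
    and hF: "holo_map_on F Y" and dom: "\<forall>p\<in>Y. \<forall>D. (F has_derivative D) (at p) \<longrightarrow> theta_dominant D"
    using data unfolding hyp_tr_data_def by blast+
  have stable: "F ` zeta Z ` (frontier (Itil \<rho>) \<times> Itil \<rho>) \<subseteq> dsYe \<rho>"
    and unstable: "F ` Y \<inter> duYe \<rho> = {}"
    using bdry unfolding boundary_conditions_def by blast+
  obtain \<zeta>0 where \<zeta>0: "(\<zeta>0, w0) \<in> Ye \<rho>" "Z (\<zeta>0, w0) = z0"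
    using p unfolding Y zeta_def by force
  obtain \<xi>1 where \<xi>1: "(\<xi>1, w1) \<in> Ye \<rho>" "Z' (\<xi>1, w1) = z1"
    using q unfolding Y' zeta_def by force
  have F\<zeta>0: "F (zeta Z (\<zeta>0, w0)) = (z1, w1)" using Fp \<zeta>0(2) by (simp add: zeta_def)
  have interior: "\<zeta>0 \<in> interior (Itil \<rho>)" "w1 \<in> interior (Itil \<rho>)"
    using crossing_point_interior[OF sub[unfolded Y] stable unstable[unfolded Y] Y'_stable \<zeta>0(1) F\<zeta>0 q]
    by blast+
  obtain DZ where DZ: "(Z has_derivative DZ) (at (\<zeta>0, w0))" "\<forall>c u. DZ (cmul c u) = c * DZ u"
    "DZ (1,0) \<noteq> 0" "cmod (DZ (0,1)) \<le> theta"
    by (rule box_chart_has_derivative[OF Z \<zeta>0(1)])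
  obtain DZ' where DZ': "(Z' has_derivative DZ') (at (\<xi>1, w1))" "\<forall>c u. DZ' (cmul c u) = c * DZ' u"
    "DZ' (1,0) \<noteq> 0" "cmod (DZ' (0,1)) \<le> theta"
    by (rule box_chart_has_derivative[OF Z' \<xi>1(1)])
  obtain DF where DF: "(F has_derivative DF) (at (z0, w0))" "cmul_linear DF"
    by (rule holo_map_on_has_derivative[OF hF p])
  define E DE where "E = F \<circ> zeta Z" and "DE v = DF (DZ v, snd v)" for v
  have hE: "holo_map_on E {(\<zeta>0, w0)}"
    unfolding E_def using Z hF \<zeta>0(1)
    by (intro holo_map_on_compose holo_map_on_zeta) (auto simp: box_chart_def Y intro: holo2_on_subset)
  have dE: "(E has_derivative DE) (at (\<zeta>0, w0))"
    unfolding E_def DE_def comp_def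
    using has_derivative_compose[OF zeta_has_derivative[OF DZ(1)]] DF(1) \<zeta>0(2) by (simp add: zeta_def)
  have "fst (DF (DZ (1,0), 0)) \<noteq> DZ' (0,1) * snd (DF (DZ (1,0), 0))"
    using theta_dominant_transversal[OF has_derivative_linear[OF DF(1)] DF(2) _ DZ'(4) DZ(3)] dom p DF(1)
    by blast
  then have transversal: "fst (DE (1,0)) \<noteq> DZ' (0,1) * snd (DE (1,0))"
    by (simp add: DE_def)
  have "holo2_on Z' {(\<xi>1, snd (E (\<zeta>0, w0)))}"
    using Z' \<xi>1(1) F\<zeta>0 by (auto simp: box_chart_def E_def intro: holo2_on_subset)
  moreover have "fst (E (\<zeta>0, w0)) = Z' (\<xi>1, snd (E (\<zeta>0, w0)))" using F\<zeta>0 \<xi>1(2) by (simp add: E_def)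
  moreover have "(Z' has_derivative DZ') (at (\<xi>1, snd (E (\<zeta>0, w0))))" using DZ'(1) F\<zeta>0 by (simp add: E_def)
  ultimately obtain g Dg where "g (\<xi>1, w0) = \<zeta>0" "(g has_derivative Dg) (at (\<xi>1, w0))" "Dg (1,0) \<noteq> 0"
    "\<forall>\<^sub>F x in nhds (\<xi>1, w0). fst (E (g x, snd x)) = Z' (fst x, snd (E (g x, snd x)))"
    using holo_crossing_solution[OF hE _ _ dE _ transversal DZ'(3)] by blast
  moreover have "(\<xi>1, w0) \<in> Ye \<rho>" using \<xi>1(1) \<zeta>0(1) by (simp add: Ye_def)
  ultimately show ?thesis
    using star_dom_local_chart_of_crossing[OF Y Y' DZ(1-3) dE[unfolded E_def comp_def] interior(1)]
      interior(2) F\<zeta>0 \<zeta>0(2) by (simp add: E_def)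
qed

lemma star_dom_local_chart:
  assumes rho: "\<rho> > 0" and hyp: "hyp_tr \<rho> Y F" and hyp': "hyp_tr \<rho> Y' F'"
    and p: "(z0, w0) \<in> Y" and Fp: "F (z0, w0) = (z1, w1)" and q: "(z1, w1) \<in> Y'"
  shows "local_chart \<rho> (star_dom Y F Y') (z0, w0)"
proof -
  obtain Z where data: "hyp_tr_data \<rho> Z Y F" and bdry: "Y = Ye \<rho> \<and> F = id \<or> boundary_conditions \<rho> Z Y F"
    by (rule hyp_tr_structure[OF rho hyp])
  obtain Z' where data': "hyp_tr_data \<rho> Z' Y' F'"
    and bdry': "Y' = Ye \<rho> \<and> F' = id \<or> boundary_conditions \<rho> Z' Y' F'"
    by (rule hyp_tr_structure[OF rho hyp'])
  show ?thesis
  proof (cases "Y' = Ye \<rho> \<and> F' = id")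
    case True
    then have "star_dom Y F Y' = Y" using data by (auto simp: star_dom_def hyp_tr_data_def)
    then show ?thesis using hyp_tr_local_chart[OF rho hyp p] by simp
  next
    case False
    with bdry' have Y'_stable: "Y' \<inter> dsYe \<rho> = {}" by (simp add: boundary_conditions_def)
    show ?thesis
    proof (cases "Y = Ye \<rho> \<and> F = id")
      case True
      have "z1 \<in> interior (Itil \<rho>)"
      proof (rule Itil_interiorI)
        show "z1 \<in> Itil \<rho>" "z1 \<notin> frontier (Itil \<rho>)"
          using True p Fp q Y'_stable by (auto simp: Ye_def dsYe_def)
      qed
      moreover have "star_dom Y F Y' = Y' \<inter> Ye \<rho>" and "(z0, w0) = (z1, w1)"
        using True Fp by (auto simp: star_dom_def)
      ultimately show ?thesis
        using local_chart_Int_Ye[OF hyp_tr_local_chart[OF rho hyp' q]] by simp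
    next
      case False
      with bdry have "boundary_conditions \<rho> Z Y F" by blast
      moreover have "box_chart \<rho> Z'" "Y' = zeta Z' ` Ye \<rho>"
        using data' unfolding hyp_tr_data_def by blast+
      ultimately show ?thesis
        using star_dom_local_chart_crossing[OF rho data _ _ _ Y'_stable p Fp q] by blast
    qed
  qed
qed

section \<open>The distortion estimate\<close>

lemma theta_dominant_comp_bounds:
  assumes "linear D'" "cmul_linear D'" "theta_dominant D" "theta_dominant D'"
  shows "(1 - theta\<^sup>2) * (cmod (fst (D (1,0))) * cmod (fst (D' (1,0)))) \<le> cmod (fst (D' (D (1,0))))"
    and "cmod (fst (D' (D (1,0)))) \<le> (1 + theta\<^sup>2) * (cmod (fst (D (1,0))) * cmod (fst (D' (1,0))))"
proof -
  define P R P' Q' where "P = fst (D (1,0))" and "R = snd (D (1,0))"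
    and "P' = fst (D' (1,0))" and "Q' = fst (D' (0,1))"
  have N: "fst (D' (D (1,0))) = P * P' + R * Q'"
    using cmul_linear_apply[OF assms(1,2), of P R] by (simp add: P_def R_def P'_def Q'_def)
  have "cmod (R * Q') \<le> (theta * cmod P) * (theta * cmod P')"
    unfolding norm_mult using assms(3,4) theta_pos
    by (intro mult_mono) (auto simp: theta_dominant_def P_def R_def P'_def Q'_def)
  then have small: "cmod (R * Q') \<le> theta\<^sup>2 * (cmod P * cmod P')"
    by (simp add: power2_eq_square algebra_simps)
  show "(1 - theta\<^sup>2) * (cmod P * cmod P') \<le> cmod (fst (D' (D (1,0))))"
    using norm_diff_ineq[of "P * P'" "R * Q'"] small unfolding N
    by (simp add: norm_mult algebra_simps)
  show "cmod (fst (D' (D (1,0)))) \<le> (1 + theta\<^sup>2) * (cmod P * cmod P')"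
    using norm_triangle_ineq[of "P * P'" "R * Q'"] small unfolding N
    by (simp add: norm_mult algebra_simps)
qed

lemma theta_dominant_comp_fst_nonzero:
  assumes "linear D'" "cmul_linear D'" "theta_dominant D" "theta_dominant D'"
  shows "fst ((D' \<circ> D) (1,0)) \<noteq> 0"
proof -
  have "cmod (fst (D (1,0))) * cmod (fst (D' (1,0))) > 0"
    using assms(3,4) by (simp add: theta_dominant_def)
  then show ?thesis
    using theta_dominant_comp_bounds(1)[OF assms]
    by (auto simp: theta_def power2_eq_square mult.commute)
qed

lemma quotient_bounds:
  fixes a n t :: real
  assumes "a > 0" "0 \<le> t" "t < 1" "(1 - t) * a \<le> n" "n \<le> (1 + t) * a"
  shows "1 / (1 + t) \<le> a / n" and "a / n \<le> 1 / (1 - t)"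
proof -
  have "(1 - t) * a > 0" using assms(1,3) by simp
  then have "n > 0" using assms(4) by linarith
  then show "1 / (1 + t) \<le> a / n" "a / n \<le> 1 / (1 - t)"
    using assms by (simp_all add: field_simps)
qed

lemma norm_ratio_cancel:
  fixes d d' P P' N :: complex
  assumes "d \<noteq> 0" "d' \<noteq> 0" "P \<noteq> 0" "P' \<noteq> 0"
  shows "cmod (d' * d / N) / (cmod (d / P) * cmod (d' / P')) = cmod P * cmod P' / cmod N"
  using assms by (simp add: norm_divide norm_mult field_simps)

lemma derivative_ratio_bounds:
  assumes D: "linear D" "cmul_linear D" "theta_dominant D"
    and D': "linear D'" "cmul_linear D'" "theta_dominant D'"
  defines "N \<equiv> fst ((D' \<circ> D) (1,0))"
  shows "1 / (1 + theta\<^sup>2) \<le> cmod (1 / N) / (cmod (1 / fst (D (1,0))) * cmod (1 / fst (D' (1,0))))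
    \<and> cmod (1 / N) / (cmod (1 / fst (D (1,0))) * cmod (1 / fst (D' (1,0)))) \<le> 1 / (1 - theta\<^sup>2)
    \<and> 1 / (1 + theta\<^sup>2) \<le> cmod (det2 (D' \<circ> D) / N)
        / (cmod (det2 D / fst (D (1,0))) * cmod (det2 D' / fst (D' (1,0))))
    \<and> cmod (det2 (D' \<circ> D) / N) / (cmod (det2 D / fst (D (1,0))) * cmod (det2 D' / fst (D' (1,0))))
        \<le> 1 / (1 - theta\<^sup>2)"
proof -
  define P P' where "P = fst (D (1,0))" and "P' = fst (D' (1,0))"
  have nonzero: "P \<noteq> 0" "P' \<noteq> 0" "det2 D \<noteq> 0" "det2 D' \<noteq> 0"
    using D(3) D'(3) by (auto simp: theta_dominant_def P_def P'_def)
  have "cmod (1 / N) / (cmod (1 / P) * cmod (1 / P')) = cmod P * cmod P' / cmod N"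
    using norm_ratio_cancel[of 1 1 P P' N] nonzero by simp
  moreover have "cmod (det2 (D' \<circ> D) / N) / (cmod (det2 D / P) * cmod (det2 D' / P'))
      = cmod P * cmod P' / cmod N"
    using norm_ratio_cancel[OF nonzero(3,4,1,2), of N] det2_comp[OF D(1,2) D'(1,2)] by simp
  moreover have "0 \<le> theta\<^sup>2" "theta\<^sup>2 < 1" by (simp_all add: theta_def power2_eq_square)
  moreover have "cmod P * cmod P' > 0" using nonzero by simp
  ultimately show ?thesis
    using quotient_bounds theta_dominant_comp_bounds[OF D'(1,2) D(3) D'(3)]
    unfolding P_def[symmetric] P'_def[symmetric] N_def by (simp add: mult.commute)
qed

theorem lemmaB2:
  fixes \<rho> :: real
    and Y Y' :: "(complex \<times> complex) set"
    and F F' :: "complex \<times> complex \<Rightarrow> complex \<times> complex"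
    and Z0 W1 Z1 W2 Z0t W2t :: "complex \<times> complex \<Rightarrow> complex"
    and z0 w0 z1 w1 z2 w2 :: complex
  assumes "\<rho> > 0"
    and "hyp_tr \<rho> Y F" and "hyp_tr \<rho> Y' F'"
    and "implicit_rep \<rho> Y F Z0 W1"
    and "implicit_rep \<rho> Y' F' Z1 W2"
    and "implicit_rep \<rho> (star_dom Y F Y') (F' \<circ> F) Z0t W2t"
    and "(z0, w0) \<in> Y" and "F (z0, w0) = (z1, w1)" and "(z1, w1) \<in> Y'"
    and "F' (z1, w1) = (z2, w2)"
  shows "1 / (1 + theta\<^sup>2) \<le> cmod (deriv (\<lambda>z. Z0t (z, w0)) z2)
            / (cmod (deriv (\<lambda>z. Z0 (z, w0)) z1) * cmod (deriv (\<lambda>z. Z1 (z, w1)) z2))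
       \<and> cmod (deriv (\<lambda>z. Z0t (z, w0)) z2)
            / (cmod (deriv (\<lambda>z. Z0 (z, w0)) z1) * cmod (deriv (\<lambda>z. Z1 (z, w1)) z2))
          \<le> 1 / (1 - theta\<^sup>2)
       \<and> 1 / (1 + theta\<^sup>2) \<le> cmod (deriv (\<lambda>w. W2t (z2, w)) w0)
            / (cmod (deriv (\<lambda>w. W1 (z1, w)) w0) * cmod (deriv (\<lambda>w. W2 (z2, w)) w1))
       \<and> cmod (deriv (\<lambda>w. W2t (z2, w)) w0)
            / (cmod (deriv (\<lambda>w. W1 (z1, w)) w0) * cmod (deriv (\<lambda>w. W2 (z2, w)) w1))
          \<le> 1 / (1 - theta\<^sup>2)"
proof -
  note rho = assms(1)
  obtain D where D: "(F has_derivative D) (at (z0, w0))" "cmul_linear D" "theta_dominant D"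
    by (rule hyp_tr_derivative[OF rho assms(2,7)])
  obtain D' where D': "(F' has_derivative D') (at (z1, w1))" "cmul_linear D'" "theta_dominant D'"
    by (rule hyp_tr_derivative[OF rho assms(3,9)])
  have lin: "linear D" "linear D'"
    using D(1) D'(1) by (simp_all add: has_derivative_linear)
  have DD': "(F' \<circ> F has_derivative D' \<circ> D) (at (z0, w0))"
    using has_derivative_compose[OF D(1)] D'(1) assms(8) by (simp add: comp_def)
  have images: "F (z0, w0) \<in> Ye \<rho>" "F' (z1, w1) \<in> Ye \<rho>" "(F' \<circ> F) (z0, w0) \<in> Ye \<rho>"
    using hyp_tr_image_subset[OF rho assms(2)] hyp_tr_image_subset[OF rho assms(3)] assms(7-9)
    by auto
  have P: "fst (D (1,0)) \<noteq> 0" "fst (D' (1,0)) \<noteq> 0"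
    using D(3) D'(3) by (simp_all add: theta_dominant_def)
  note first = implicit_rep_deriv[OF rho assms(4) hyp_tr_local_chart[OF rho assms(2,7)] images(1) D(1,2) P(1)]
  note second = implicit_rep_deriv[OF rho assms(5) hyp_tr_local_chart[OF rho assms(3,9)] images(2) D'(1,2) P(2)]
  note composite = implicit_rep_deriv[OF rho assms(6) star_dom_local_chart[OF rho assms(2,3,7,8,9)]
      images(3) DD' cmul_linear_comp[OF D(2) D'(2)] theta_dominant_comp_fst_nonzero[OF lin(2) D'(2) D(3) D'(3)]]
  show ?thesis
    using derivative_ratio_bounds[OF lin(1) D(2,3) lin(2) D'(2,3)] first second composite assms(8,10)
    by (simp add: comp_def)
qed

end
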